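(* Let $(X_t)_{t\in[0,1]}$ be a centered process as in the context whose KL coefficients $(Z_k)$ are mutually independent, each $Z_k$ sub-Gaussian with mean $0$ and parameter $\sqrt{\lambda_k}$; assume each eigenfunction $e_k$ is Lipschitz on $[0,1]$ with constant $G(k)$ and $C_{\mathrm M}:=\sup_k\lambda_kG(k)^2<\infty$. Let $c_g\in\mathbb R$, $K_g\ge0$, $K'_g\ge0$, and for each $t\in[0,1]$ let $g_t:\mathbb R\to\mathbb R$ satisfy $g_t(x)-g_t(y)\le\max(|e^{c_gx}-e^{c_gy}|,K_g|x-y|)$ for all $x,y$, and in addition $|g_t(x)-g_s(x)|\le K'_g|t-s|$ for all $x\in\mathbb R$, $s,t\in[0,1]$. Let $S_t=g_t(X_t)$. Then there is a constant $C_3$ independent of $s,t,\epsilon$ such that for all $\epsilon>0$ and $s,t\in[0,1]$, $$\mathbb E\big[(S_t-S_s)^2\big]\le C_3\Big(\big(L_X(\epsilon)+K_g'^2\big)(t-s)^2+\epsilon^2\Big).$$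
   Context: Standing setup: $(X_t)_{t\in[0,1]}$ is a centered stochastic process with $\mathbb E[X_t^2]<\infty$ whose covariance $k_X(s,t)=\mathbb E[X_sX_t]$ is continuous on $[0,1]^2$. Let $\mathcal K$ be the integral operator $(\mathcal Kf)(t)=\int_0^1k_X(s,t)f(s)\,ds$ on $L^2([0,1])$, with orthonormal eigenfunctions $(e_k)_{k\ge1}$ and eigenvalues $\lambda_1\ge\lambda_2\ge\dots\ge0$. The Karhunen–Loève (KL) expansion is $X_t=\sum_{k\ge1}Z_ke_k(t)$ with $Z_k=\int_0^1X_te_k(t)\,dt$, converging in $L^2(\mathbb P)$ uniformly in $t$; the $Z_k$ are centered and uncorrelated with $\mathbb E[Z_k^2]=\lambda_k$. The truncation index $L_X(\epsilon)$ is the smallest natural number $L$ such that $\mathbb E\big[(\sum_{k=1}^{L}Z_ke_k(t)-X_t)^2\big]\le\epsilon^2$ for all $t\in[0,1]$. A real random variable $W$ with mean $m$ is sub-Gaussian with parameter $s\ge0$ if $\mathbb E[\exp(\theta(W-m))]\le\exp(\theta^2s^2/2)$ for all $\theta\in\mathbb R$. *)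

theory Defs
  imports "HOL-Probability.Probability"
begin

definition cov_fun :: "'a measure \<Rightarrow> (real \<Rightarrow> 'a \<Rightarrow> real) \<Rightarrow> real \<Rightarrow> real \<Rightarrow> real" where
  "cov_fun M X s t = (\<integral>\<omega>. X s \<omega> * X t \<omega> \<partial>M)"

definition KL_coeff :: "(real \<Rightarrow> 'a \<Rightarrow> real) \<Rightarrow> (nat \<Rightarrow> real \<Rightarrow> real) \<Rightarrow> nat \<Rightarrow> 'a \<Rightarrow> real" where
  "KL_coeff X e k \<omega> = (LINT t:{0..1}|lborel. X t \<omega> * e k t)"

text \<open>Truncation index L_X(eps): smallest L with
  E[(sum_{k<L} Z_k e_k(t) - X_t)^2] <= eps^2 for all t in [0,1]
  (eigenfunctions indexed from 0, so this is the sum of the first L terms).\<close>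
definition KL_trunc_index ::
  "'a measure \<Rightarrow> (real \<Rightarrow> 'a \<Rightarrow> real) \<Rightarrow> (nat \<Rightarrow> real \<Rightarrow> real) \<Rightarrow> real \<Rightarrow> nat" where
  "KL_trunc_index M X e \<epsilon> = (LEAST L::nat. \<forall>t\<in>{0..1}.
      (\<integral>\<omega>. ((\<Sum>k<L. KL_coeff X e k \<omega> * e k t) - X t \<omega>)\<^sup>2 \<partial>M) \<le> \<epsilon>\<^sup>2)"

definition sub_gaussian :: "'a measure \<Rightarrow> ('a \<Rightarrow> real) \<Rightarrow> real \<Rightarrow> real \<Rightarrow> bool" where
  "sub_gaussian M W m s \<longleftrightarrow> W \<in> borel_measurable M \<and> integrable M W \<and> (\<integral>\<omega>. W \<omega> \<partial>M) = m \<and>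
     (\<forall>\<theta>::real. integrable M (\<lambda>\<omega>. exp (\<theta> * (W \<omega> - m))) \<and>
        (\<integral>\<omega>. exp (\<theta> * (W \<omega> - m)) \<partial>M) \<le> exp (\<theta>\<^sup>2 * s\<^sup>2 / 2))"

end

theory Submission
  imports Defs
begin

text \<open>
  Fix a truncation level \<open>L\<close> and write \<open>R\<^sub>L(u)\<close> for the remainder of the
  expansion at \<open>u\<close>, so that
  \<open>X\<^sub>t - X\<^sub>s = \<Sum>\<^bsub>k<L\<^esub> Z\<^sub>k (e\<^sub>k t - e\<^sub>k s) - R\<^sub>L(t) + R\<^sub>L(s)\<close>.
  By orthogonality of the \<open>Z\<^sub>k\<close> and the Lipschitz bounds the sum has second moment
  at most \<open>L C\<^sub>M (t - s)\<^sup>2\<close>, and for \<open>L = L\<^sub>X(\<epsilon>)\<close> each remainder has second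
  moment at most \<open>\<epsilon>\<^sup>2\<close>; that \<open>L\<^sub>X(\<epsilon>)\<close> exists is Mercer's theorem on the diagonal
  combined with Dini's theorem.

  Independence and sub-Gaussianity make every finite combination \<open>\<Sum> a\<^sub>k Z\<^sub>k\<close>
  sub-Gaussian with variance proxy equal to its variance, and by Fatou's lemma this
  passes to the \<open>L\<^sup>2\<close>-limits \<open>X\<^sub>t\<close> and \<open>X\<^sub>t - X\<^sub>s\<close>. Hence
  \<open>E[(X\<^sub>t - X\<^sub>s)\<^sup>4] \<le> 1024 E[(X\<^sub>t - X\<^sub>s)\<^sup>2]\<^sup>2\<close>, and \<open>E[exp(c X\<^sub>u)]\<close> is bounded
  uniformly in \<open>u\<close>. The hypotheses on \<open>g\<close> bound \<open>(S\<^sub>t - S\<^sub>s)\<^sup>2\<close> pointwise by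
  \<open>(X\<^sub>t - X\<^sub>s)\<^sup>2 (exp(2 c X\<^sub>t) + exp(2 c X\<^sub>s))\<close> plus multiples of
  \<open>(X\<^sub>t - X\<^sub>s)\<^sup>2\<close> and \<open>(t - s)\<^sup>2\<close>, and AM-GM splits the mixed term into the
  two moments just controlled.
\<close>

lemma power_le_exp_plus_exp_uminus:
  fixes x :: real
  assumes "n > 0"
  shows "x ^ n \<le> real n ^ n * (exp x + exp (- x))"
proof -
  have "\<bar>x\<bar> / real n \<le> exp (\<bar>x\<bar> / real n)"
    by (smt (verit) exp_ge_add_one_self)
  hence "(\<bar>x\<bar> / real n) ^ n \<le> exp (\<bar>x\<bar> / real n) ^ n"
    by (intro power_mono) auto
  also have "\<dots> = exp \<bar>x\<bar>"
    using assms by (simp add: exp_of_nat_mult[symmetric])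
  finally have "\<bar>x\<bar> ^ n \<le> real n ^ n * exp \<bar>x\<bar>"
    using assms by (simp add: power_divide field_simps)
  moreover have "x ^ n \<le> \<bar>x\<bar> ^ n"
    by (metis abs_ge_self power_abs)
  moreover have "exp \<bar>x\<bar> \<le> exp x + exp (- x)"
    by (cases "x \<ge> 0") auto
  ultimately show ?thesis
    by (smt (verit) mult_left_mono zero_le_power of_nat_0_le_iff)
qed

lemma abs_mult_le_weighted_squares:
  fixes x y d :: real
  assumes "d > 0"
  shows "\<bar>x * y\<bar> \<le> d / 2 * x\<^sup>2 + y\<^sup>2 / (2 * d)"
proof -
  have "0 \<le> (d * \<bar>x\<bar> - \<bar>y\<bar>)\<^sup>2" by simp
  hence "2 * d * \<bar>x * y\<bar> \<le> d\<^sup>2 * x\<^sup>2 + y\<^sup>2"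
    by (simp add: power2_eq_square algebra_simps abs_mult)
  thus ?thesis
    using assms by (simp add: field_simps power2_eq_square)
qed

lemma abs_mult_le_half_squares: "\<bar>(x::real) * y\<bar> \<le> (x\<^sup>2 + y\<^sup>2) / 2"
  using abs_mult_le_weighted_squares[of 1 x y] by simp

lemma square_diff_le: "((a::real) - b)\<^sup>2 \<le> 2 * a\<^sup>2 + 2 * b\<^sup>2"
proof -
  have "0 \<le> (a + b)\<^sup>2" by simp
  thus ?thesis by (simp add: power2_eq_square algebra_simps)
qed

lemma square_diff_add_le: "((x::real) - y + z)\<^sup>2 \<le> 3 * x\<^sup>2 + 3 * y\<^sup>2 + 3 * z\<^sup>2"
proof -
  have "0 \<le> (x + y)\<^sup>2 + (x - z)\<^sup>2 + (y + z)\<^sup>2" by simp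
  thus ?thesis by (simp add: power2_eq_square algebra_simps)
qed

lemma exp_diff_le_mult_exp: "b \<le> a \<Longrightarrow> exp a - exp b \<le> (a - b) * exp (a::real)"
proof -
  have "exp a * (1 + (b - a)) \<le> exp a * exp (b - a)"
    by (simp add: mult_left_mono exp_ge_add_one_self)
  thus ?thesis by (simp add: algebra_simps exp_diff)
qed

lemma abs_exp_diff_le: "\<bar>exp a - exp b\<bar> \<le> \<bar>a - b\<bar> * (exp a + exp (b::real))"
proof -
  have "\<bar>exp a - exp b\<bar> \<le> \<bar>a - b\<bar> * max (exp a) (exp b)"
    using exp_diff_le_mult_exp[of b a] exp_diff_le_mult_exp[of a b]
    by (cases "b \<le> a") (auto simp: abs_if max_def algebra_simps)
  also have "\<dots> \<le> \<bar>a - b\<bar> * (exp a + exp b)"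
    by (intro mult_left_mono) auto
  finally show ?thesis .
qed

lemma exp_mult_diff_square_le:
  "(exp (c * x) - exp (c * y))\<^sup>2 \<le> 2 * c\<^sup>2 * (x - y)\<^sup>2 * (exp (2 * c * x) + exp (2 * c * (y::real)))"
proof -
  have "(exp (c * x) - exp (c * y))\<^sup>2 \<le> (\<bar>c * x - c * y\<bar> * (exp (c * x) + exp (c * y)))\<^sup>2"
    by (subst power2_abs[symmetric], intro power_mono abs_exp_diff_le) simp
  also have "\<dots> = (c * x - c * y)\<^sup>2 * (exp (c * x) + exp (c * y))\<^sup>2"
    by (simp add: power_mult_distrib)
  also have "\<dots> \<le> (c * x - c * y)\<^sup>2 * (2 * (exp (c * x))\<^sup>2 + 2 * (exp (c * y))\<^sup>2)"
    using square_diff_le[of "exp (c * x)" "- exp (c * y)"] by (intro mult_left_mono) auto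
  also have "\<dots> = 2 * c\<^sup>2 * (x - y)\<^sup>2 * (exp (2 * c * x) + exp (2 * c * y))"
    by (simp add: power2_eq_square algebra_simps flip: exp_add)
  finally show ?thesis .
qed

lemma bound_le_const_mult:
  fixes A C L q d E :: real
  assumes "A \<ge> 0" "C \<ge> 0" "L \<ge> 0" "q \<ge> 0" "d \<ge> 0" "E \<ge> 0"
  shows "A * (3 * L * C * d + 6 * E) + 2 * q * d \<le> (3 * A * C + 6 * A + 2) * ((L + q) * d + E)"
proof -
  have "0 \<le> 3 * A * C * (q * d + E) + 6 * A * ((L + q) * d) + 2 * (L * d) + 2 * E"
    using assms by simp
  thus ?thesis
    by (simp add: algebra_simps)
qed

lemma abs_diff_le_max_exp_of_diff_le:
  fixes h :: "real \<Rightarrow> real"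
  assumes "\<And>x y. h x - h y \<le> max \<bar>exp (c * x) - exp (c * y)\<bar> (K * \<bar>x - y\<bar>)"
  shows "\<bar>h x - h y\<bar> \<le> max \<bar>exp (c * x) - exp (c * y)\<bar> (K * \<bar>x - (y::real)\<bar>)"
  using assms[of x y] assms[of y x] by (simp add: abs_le_iff abs_minus_commute)

lemma square_diff_le_of_diff_le_max_exp:
  fixes h h' :: "real \<Rightarrow> real"
  assumes h: "\<And>x y. h x - h y \<le> max \<bar>exp (c * x) - exp (c * y)\<bar> (K * \<bar>x - y\<bar>)"
    and hh': "\<bar>h y - h' y\<bar> \<le> T" and K: "K \<ge> 0"
  shows "(h x - h' y)\<^sup>2
    \<le> 4 * c\<^sup>2 * (x - y)\<^sup>2 * (exp (2 * c * x) + exp (2 * c * y)) + 2 * K\<^sup>2 * (x - y)\<^sup>2 + 2 * T\<^sup>2"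
proof -
  have "(h x - h y)\<^sup>2 \<le> (max \<bar>exp (c * x) - exp (c * y)\<bar> (K * \<bar>x - y\<bar>))\<^sup>2"
    by (subst power2_abs[symmetric], intro power_mono abs_diff_le_max_exp_of_diff_le[OF h]) simp
  also have "\<dots> \<le> (exp (c * x) - exp (c * y))\<^sup>2 + K\<^sup>2 * (x - y)\<^sup>2"
    using K by (cases "\<bar>exp (c * x) - exp (c * y)\<bar> \<le> K * \<bar>x - y\<bar>")
      (simp_all add: max_def power_mult_distrib)
  finally have space: "(h x - h y)\<^sup>2
      \<le> 2 * c\<^sup>2 * (x - y)\<^sup>2 * (exp (2 * c * x) + exp (2 * c * y)) + K\<^sup>2 * (x - y)\<^sup>2"
    using exp_mult_diff_square_le[of c x y] by linarith
  have time: "(h y - h' y)\<^sup>2 \<le> T\<^sup>2"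
    by (subst power2_abs[symmetric], intro power_mono hh') simp
  have "(h x - h' y)\<^sup>2 \<le> 2 * (h x - h y)\<^sup>2 + 2 * (h y - h' y)\<^sup>2"
    using square_diff_le[of "h x - h y" "h' y - h y"] by (simp add: power2_commute)
  with space time show ?thesis by linarith
qed

lemma continuous_on_of_Lipschitz_bound:
  fixes f :: "real \<Rightarrow> real"
  assumes "\<forall>x\<in>S. \<forall>y\<in>S. \<bar>f x - f y\<bar> \<le> G * \<bar>x - y\<bar>"
  shows "continuous_on S f"
proof (rule lipschitz_on_continuous_on)
  show "(max 0 G)-lipschitz_on S f"
  proof (rule lipschitz_onI)
    show "dist (f x) (f y) \<le> max 0 G * dist x y" if "x \<in> S" "y \<in> S" for x y
      using assms that mult_right_mono[of G "max 0 G" "\<bar>x - y\<bar>"] by (force simp: dist_real_def)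
  qed simp
qed

lemma continuous_on_of_diff_le_max_exp:
  fixes h :: "real \<Rightarrow> real"
  assumes "\<And>x y. h x - h y \<le> max \<bar>exp (c * x) - exp (c * y)\<bar> (K * \<bar>x - y\<bar>)"
  shows "continuous_on UNIV h"
proof -
  have "isCont h x" for x
  proof -
    let ?m = "\<lambda>y. max \<bar>exp (c * y) - exp (c * x)\<bar> (K * \<bar>y - x\<bar>)"
    have "(?m \<longlongrightarrow> max \<bar>exp (c * x) - exp (c * x)\<bar> (K * \<bar>x - x\<bar>)) (at x)"
      by (intro tendsto_intros)
    hence m: "(?m \<longlongrightarrow> 0) (at x)" by simp
    have "\<forall>\<^sub>F y in at x. norm (h y - h x) \<le> ?m y"
      using abs_diff_le_max_exp_of_diff_le[OF assms] by (simp add: always_eventually)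
    hence "((\<lambda>y. h y - h x) \<longlongrightarrow> 0) (at x)"
      using m by (rule Lim_null_comparison)
    thus ?thesis unfolding isCont_def by (rule LIM_zero_cancel)
  qed
  thus ?thesis by (simp add: continuous_at_imp_continuous_on)
qed

lemma set_integrable_continuous_mult:
  fixes f h :: "real \<Rightarrow> real"
  assumes S: "compact S" and f: "continuous_on S f" and h: "set_integrable lborel S h"
  shows "set_integrable lborel S (\<lambda>s. f s * h s)"
proof -
  obtain C where C: "\<And>s. s \<in> S \<Longrightarrow> \<bar>f s\<bar> \<le> C"
    using compact_imp_bounded[OF compact_continuous_image[OF f S]] by (auto simp: bounded_iff)
  have fm: "(\<lambda>s. indicator S s * f s) \<in> borel_measurable lborel"
    using borel_measurable_continuous_on_indicator[OF _ f] S by (simp add: compact_imp_closed)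
  have hm: "(\<lambda>s. indicator S s *\<^sub>R h s) \<in> borel_measurable lborel"
    using h unfolding set_integrable_def by auto
  have "(\<lambda>s. (indicator S s * f s) * (indicator S s *\<^sub>R h s)) \<in> borel_measurable lborel"
    using fm hm by measurable
  moreover have "(\<lambda>s. (indicator S s * f s) * (indicator S s *\<^sub>R h s))
      = (\<lambda>s. indicator S s *\<^sub>R (f s * h s))"
    by (auto simp: fun_eq_iff indicator_def)
  ultimately have m: "(\<lambda>s. indicator S s *\<^sub>R (f s * h s)) \<in> borel_measurable lborel"
    by simp
  have bound: "norm (indicator S s *\<^sub>R (f s * h s)) \<le> norm (C * \<bar>indicator S s *\<^sub>R h s\<bar>)" for s
  proof (cases "s \<in> S")
    case True
    have "\<bar>f s\<bar> * \<bar>h s\<bar> \<le> \<bar>C\<bar> * \<bar>h s\<bar>"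
      using C[OF True] by (intro mult_right_mono) auto
    thus ?thesis using True by (simp add: abs_mult)
  qed simp
  have "integrable lborel (\<lambda>s. C * \<bar>indicator S s *\<^sub>R h s\<bar>)"
    using h unfolding set_integrable_def by auto
  thus ?thesis
    unfolding set_integrable_def by (rule Bochner_Integration.integrable_bound[OF _ m AE_I2[OF bound]])
qed

lemma tendsto_set_integral_uniform_limit_mult:
  fixes f :: "nat \<Rightarrow> real \<Rightarrow> real" and F h :: "real \<Rightarrow> real"
  assumes S: "compact S" and lim: "uniform_limit S f F sequentially"
    and f: "\<And>n. continuous_on S (f n)" and F: "continuous_on S F"
    and h: "set_integrable lborel S h"
  shows "(\<lambda>n. LINT s:S|lborel. f n s * h s) \<longlonglongrightarrow> (LINT s:S|lborel. F s * h s)"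
proof (rule LIMSEQ_I)
  fix r :: real assume r: "r > 0"
  define A where "A = (LINT s:S|lborel. \<bar>h s\<bar>)"
  have "A \<ge> 0"
    unfolding A_def set_lebesgue_integral_def by (intro integral_nonneg_AE) (auto simp: indicator_def)
  hence "r / (A + 1) > 0" using r by simp
  then obtain N where N: "\<forall>n\<ge>N. \<forall>x\<in>S. \<bar>f n x - F x\<bar> < r / (A + 1)"
    using lim unfolding uniform_limit_sequentially_iff dist_real_def by blast
  have "norm ((LINT s:S|lborel. f n s * h s) - (LINT s:S|lborel. F s * h s)) < r"
    if n: "n \<ge> N" for n
  proof -
    have diff: "set_integrable lborel S (\<lambda>s. (f n s - F s) * h s)"
      using S f F h by (intro set_integrable_continuous_mult continuous_intros)
    have "(LINT s:S|lborel. f n s * h s) - (LINT s:S|lborel. F s * h s)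
        = (LINT s:S|lborel. (f n s - F s) * h s)"
      using S f F h
      by (simp add: left_diff_distrib set_integral_diff(2) set_integrable_continuous_mult)
    also have "norm \<dots> \<le> (LINT s:S|lborel. norm ((f n s - F s) * h s))"
      by (rule set_integral_norm_bound[OF diff])
    also have "\<dots> \<le> (LINT s:S|lborel. r / (A + 1) * \<bar>h s\<bar>)"
    proof (rule set_integral_mono)
      show "set_integrable lborel S (\<lambda>s. norm ((f n s - F s) * h s))"
        using set_integrable_abs[OF diff] by simp
      show "set_integrable lborel S (\<lambda>s. r / (A + 1) * \<bar>h s\<bar>)"
        using set_integrable_abs[OF h] by (rule set_integrable_mult_right)
      show "norm ((f n s - F s) * h s) \<le> r / (A + 1) * \<bar>h s\<bar>" if "s \<in> S" for s
        unfolding real_norm_def abs_mult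
        using less_imp_le[OF N[rule_format, OF n that]] by (intro mult_right_mono) auto
    qed
    also have "\<dots> = r / (A + 1) * A"
      unfolding A_def by simp
    also have "\<dots> < r"
      using r \<open>A \<ge> 0\<close> by (simp add: field_simps)
    finally show ?thesis .
  qed
  thus "\<exists>N. \<forall>n\<ge>N. norm ((LINT s:S|lborel. f n s * h s) - (LINT s:S|lborel. F s * h s)) < r"
    by blast
qed

lemma continuous_nonneg_set_integral_eq_0_imp_eq_0:
  fixes f :: "real \<Rightarrow> real"
  assumes "a < b" "continuous_on {a..b} f" "\<And>x. x \<in> {a..b} \<Longrightarrow> f x \<ge> 0"
    and "set_integrable lborel {a..b} f" "(LINT s:{a..b}|lborel. f s) = 0"
    and "x \<in> {a..b}"
  shows "f x = 0"
  using assms integral_cbox_eq_0_iff[of a b f] set_borel_integral_eq_integral(2)[of "{a..b}" f]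
  by simp

lemma Dini_eventually_uniformly_less:
  fixes f :: "nat \<Rightarrow> 'a::topological_space \<Rightarrow> real"
  assumes K: "compact K" and cont: "\<And>n. continuous_on K (f n)"
    and mono: "\<And>m n x. m \<le> n \<Longrightarrow> x \<in> K \<Longrightarrow> f n x \<le> f m x"
    and lim: "\<And>x. x \<in> K \<Longrightarrow> \<exists>n. f n x < r"
  shows "\<exists>n. \<forall>x\<in>K. f n x < r"
proof -
  have "\<exists>U. open U \<and> U \<inter> K = f n -` {..<r} \<inter> K" for n
    using cont[of n] unfolding continuous_on_open_invariant by (meson open_lessThan)
  then obtain U where U: "\<And>n. open (U n)" "\<And>n. U n \<inter> K = f n -` {..<r} \<inter> K"
    by metis
  have "K \<subseteq> (\<Union>n. U n)"
    using lim U(2) by blast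
  then obtain N where N: "finite N" "K \<subseteq> (\<Union>n\<in>N. U n)"
    using compactE_image[OF K] U(1) by metis
  have "f (Max (insert 0 N)) x < r" if x: "x \<in> K" for x
  proof -
    obtain n where "n \<in> N" "x \<in> U n" using N x by auto
    moreover from this have "f n x < r" using U(2)[of n] x by auto
    ultimately show ?thesis
      using mono[of n "Max (insert 0 N)" x] x N(1) by fastforce
  qed
  thus ?thesis by blast
qed

lemma Fatou_integral_le:
  fixes f :: "nat \<Rightarrow> 'a \<Rightarrow> real"
  assumes [measurable]: "\<And>n. f n \<in> borel_measurable M" "g \<in> borel_measurable M"
    and nonneg: "\<And>n x. 0 \<le> f n x" and lim: "AE x in M. (\<lambda>n. f n x) \<longlonglongrightarrow> g x"
    and int: "\<And>n. integrable M (f n)" and le: "\<And>n. (\<integral>x. f n x \<partial>M) \<le> B"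
  shows "integrable M g" and "(\<integral>x. g x \<partial>M) \<le> B"
proof -
  have g_nonneg: "AE x in M. 0 \<le> g x"
    using lim by eventually_elim (auto intro: LIMSEQ_le_const nonneg)
  have "(\<integral>\<^sup>+x. ennreal (g x) \<partial>M) = (\<integral>\<^sup>+x. liminf (\<lambda>n. ennreal (f n x)) \<partial>M)"
    using lim by (intro nn_integral_cong_AE) (auto elim!: AE_mp intro!: lim_imp_Liminf[symmetric])
  also have "\<dots> \<le> liminf (\<lambda>n. \<integral>\<^sup>+x. ennreal (f n x) \<partial>M)"
    by (rule nn_integral_liminf) simp
  also have "\<dots> \<le> ennreal B"
    using le int nonneg
    by (intro Liminf_le[OF trivial_limit_sequentially] always_eventually allI)
       (simp add: nn_integral_eq_integral ennreal_leI)
  finally have nn: "(\<integral>\<^sup>+x. ennreal (g x) \<partial>M) \<le> ennreal B" .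
  show int_g: "integrable M g"
    using nn g_nonneg by (intro integrableI_nonneg) (auto simp: top.not_eq_extremum intro: le_less_trans)
  show "(\<integral>x. g x \<partial>M) \<le> B"
  proof (cases "B \<ge> 0")
    case True
    thus ?thesis
      using nn nn_integral_eq_integral[OF int_g g_nonneg] by (simp add: ennreal_le_iff)
  next
    case False
    moreover have "0 \<le> (\<integral>x. f 0 x \<partial>M)"
      by (rule integral_nonneg_AE) (simp add: nonneg)
    ultimately show ?thesis
      using le[of 0] by simp
  qed
qed

lemma (in finite_measure) integrable_mult_of_square_integrable:
  fixes f g :: "'a \<Rightarrow> real"
  assumes [measurable]: "f \<in> borel_measurable M" "g \<in> borel_measurable M"
    and "integrable M (\<lambda>x. (f x)\<^sup>2)" "integrable M (\<lambda>x. (g x)\<^sup>2)"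
  shows "integrable M (\<lambda>x. f x * g x)"
proof (rule Bochner_Integration.integrable_bound)
  show "integrable M (\<lambda>x. ((f x)\<^sup>2 + (g x)\<^sup>2) / 2)"
    using assms by auto
  show "AE x in M. norm (f x * g x) \<le> norm (((f x)\<^sup>2 + (g x)\<^sup>2) / 2)"
    using abs_mult_le_half_squares by auto
qed measurable

lemma (in finite_measure) integrable_square_diff:
  fixes f g :: "'a \<Rightarrow> real"
  assumes [measurable]: "f \<in> borel_measurable M" "g \<in> borel_measurable M"
    and "integrable M (\<lambda>x. (f x)\<^sup>2)" "integrable M (\<lambda>x. (g x)\<^sup>2)"
  shows "integrable M (\<lambda>x. (f x - g x)\<^sup>2)"
proof (rule Bochner_Integration.integrable_bound)
  show "integrable M (\<lambda>x. 2 * (f x)\<^sup>2 + 2 * (g x)\<^sup>2)"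
    using assms by auto
  show "AE x in M. norm ((f x - g x)\<^sup>2) \<le> norm (2 * (f x)\<^sup>2 + 2 * (g x)\<^sup>2)"
    using square_diff_le by auto
qed measurable

lemma (in prob_space) square_integrable_of_sub_gaussian:
  assumes "sub_gaussian M W 0 s"
  shows "integrable M (\<lambda>\<omega>. (W \<omega>)\<^sup>2)"
proof (rule Bochner_Integration.integrable_bound)
  have [measurable]: "W \<in> borel_measurable M"
    using assms unfolding sub_gaussian_def by simp
  have "integrable M (\<lambda>\<omega>. exp (1 * (W \<omega> - 0)))" "integrable M (\<lambda>\<omega>. exp ((-1) * (W \<omega> - 0)))"
    using assms unfolding sub_gaussian_def by blast+
  thus "integrable M (\<lambda>\<omega>. 4 * (exp (W \<omega>) + exp (- W \<omega>)))"
    by auto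
  show "AE \<omega> in M. norm ((W \<omega>)\<^sup>2) \<le> norm (4 * (exp (W \<omega>) + exp (- W \<omega>)))"
    using power_le_exp_plus_exp_uminus[of 2] by (auto simp: add_pos_pos)
  show "(\<lambda>\<omega>. (W \<omega>)\<^sup>2) \<in> borel_measurable M"
    by measurable
qed

lemma (in prob_space) fourth_moment_le_of_mgf_bound:
  fixes W :: "'a \<Rightarrow> real"
  assumes [measurable]: "W \<in> borel_measurable M" and W: "integrable M (\<lambda>\<omega>. (W \<omega>)\<^sup>2)"
    and mgf_int: "\<And>\<theta>. integrable M (\<lambda>\<omega>. exp (\<theta> * W \<omega>))"
    and mgf_le: "\<And>\<theta>. (\<integral>\<omega>. exp (\<theta> * W \<omega>) \<partial>M) \<le> exp (\<theta>\<^sup>2 * (\<integral>\<omega>. (W \<omega>)\<^sup>2 \<partial>M) / 2)"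
  shows "integrable M (\<lambda>\<omega>. (W \<omega>) ^ 4)"
    and "(\<integral>\<omega>. (W \<omega>) ^ 4 \<partial>M) \<le> 1024 * (\<integral>\<omega>. (W \<omega>)\<^sup>2 \<partial>M)\<^sup>2"
proof -
  define V where "V = (\<integral>\<omega>. (W \<omega>)\<^sup>2 \<partial>M)"
  have pow4: "(\<theta> * W \<omega>) ^ 4 \<le> 256 * (exp (\<theta> * W \<omega>) + exp ((- \<theta>) * W \<omega>))" for \<theta> \<omega>
    using power_le_exp_plus_exp_uminus[of 4 "\<theta> * W \<omega>"] by simp
  have exp_int: "integrable M (\<lambda>\<omega>. 256 * (exp (\<theta> * W \<omega>) + exp ((- \<theta>) * W \<omega>)))" for \<theta>
    using mgf_int[of \<theta>] mgf_int[of "-\<theta>"] by auto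
  show W4: "integrable M (\<lambda>\<omega>. (W \<omega>) ^ 4)"
    by (rule Bochner_Integration.integrable_bound[OF exp_int[of 1]])
       (use pow4[of 1] in \<open>auto simp: add_pos_pos\<close>)
  show "(\<integral>\<omega>. (W \<omega>) ^ 4 \<partial>M) \<le> 1024 * (\<integral>\<omega>. (W \<omega>)\<^sup>2 \<partial>M)\<^sup>2"
  proof (cases "V = 0")
    case True
    hence "AE \<omega> in M. (W \<omega>) ^ 4 = 0"
      using integral_nonneg_eq_0_iff_AE[OF W] unfolding V_def by auto
    hence "(\<integral>\<omega>. (W \<omega>) ^ 4 \<partial>M) = (\<integral>\<omega>. 0 \<partial>M)"
      by (intro integral_cong_AE) auto
    thus ?thesis by simp
  next
    case False
    hence V: "V > 0"
      unfolding V_def by (simp add: order_less_le)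
    \<comment> \<open>Chernoff-type bound at the scale \<open>\<theta> = 1 / \<surd>V\<close>\<close>
    define \<theta> where "\<theta> = 1 / sqrt V"
    have \<theta>_sq: "\<theta>\<^sup>2 = 1 / V"
      unfolding \<theta>_def using V by (simp add: power_divide)
    have \<theta>4: "\<theta> ^ 4 = 1 / V\<^sup>2"
      using power_mult[of \<theta> 2 2] \<theta>_sq by (simp add: power_divide)
    have \<theta>2: "\<theta>\<^sup>2 * V = 1"
      using \<theta>_sq V by simp
    have "\<theta> ^ 4 * (\<integral>\<omega>. (W \<omega>) ^ 4 \<partial>M) = (\<integral>\<omega>. (\<theta> * W \<omega>) ^ 4 \<partial>M)"
      by (simp add: power_mult_distrib)
    also have "\<dots> \<le> (\<integral>\<omega>. 256 * (exp (\<theta> * W \<omega>) + exp ((- \<theta>) * W \<omega>)) \<partial>M)"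
      using W4 exp_int pow4 by (intro integral_mono) (auto simp: power_mult_distrib)
    also have "\<dots> = 256 * ((\<integral>\<omega>. exp (\<theta> * W \<omega>) \<partial>M) + (\<integral>\<omega>. exp ((- \<theta>) * W \<omega>) \<partial>M))"
      using mgf_int[of \<theta>] mgf_int[of "-\<theta>"] by simp
    also have "\<dots> \<le> 256 * (exp (\<theta>\<^sup>2 * V / 2) + exp ((- \<theta>)\<^sup>2 * V / 2))"
      using mgf_le[of \<theta>] mgf_le[of "-\<theta>"] unfolding V_def by simp
    also have "\<dots> \<le> 1024"
      using \<theta>2 exp_half_le2 by simp
    finally show ?thesis
      using V \<theta>4 unfolding V_def[symmetric] by (simp add: field_simps)
  qed
qed

text \<open>
  The weighted AM-GM inequality at weight \<open>1/V\<close>, where \<open>V = E[D\<^sup>2]\<close>, turns a fourth-moment bound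
  \<open>E[D\<^sup>4] \<le> a V\<^sup>2\<close> into a bound on \<open>E[D\<^sup>2 Y]\<close> that is linear in \<open>V\<close>.
\<close>

lemma (in prob_space) expectation_square_mult_le:
  fixes D Y :: "'a \<Rightarrow> real"
  assumes Y2_int: "integrable M (\<lambda>\<omega>. (Y \<omega>)\<^sup>2)" and Y2_le: "(\<integral>\<omega>. (Y \<omega>)\<^sup>2 \<partial>M) \<le> b"
    and [measurable]: "D \<in> borel_measurable M" "Y \<in> borel_measurable M"
    and D4_int: "integrable M (\<lambda>\<omega>. (D \<omega>) ^ 4)"
    and D4_le: "(\<integral>\<omega>. (D \<omega>) ^ 4 \<partial>M) \<le> a * (\<integral>\<omega>. (D \<omega>)\<^sup>2 \<partial>M)\<^sup>2"
    and D2_int: "integrable M (\<lambda>\<omega>. (D \<omega>)\<^sup>2)"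
  shows "integrable M (\<lambda>\<omega>. (D \<omega>)\<^sup>2 * Y \<omega>)"
    and "(\<integral>\<omega>. (D \<omega>)\<^sup>2 * Y \<omega> \<partial>M) \<le> (\<integral>\<omega>. (D \<omega>)\<^sup>2 \<partial>M) * (a + b) / 2"
proof -
  define V where "V = (\<integral>\<omega>. (D \<omega>)\<^sup>2 \<partial>M)"
  have D4: "((D \<omega>)\<^sup>2)\<^sup>2 = (D \<omega>) ^ 4" for \<omega>
    by simp
  show DY_int: "integrable M (\<lambda>\<omega>. (D \<omega>)\<^sup>2 * Y \<omega>)"
    using integrable_mult_of_square_integrable[of "\<lambda>\<omega>. (D \<omega>)\<^sup>2" Y] D4_int Y2_int by (simp add: D4)
  show "(\<integral>\<omega>. (D \<omega>)\<^sup>2 * Y \<omega> \<partial>M) \<le> (\<integral>\<omega>. (D \<omega>)\<^sup>2 \<partial>M) * (a + b) / 2"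
  proof (cases "V = 0")
    case True
    hence "AE \<omega> in M. (D \<omega>)\<^sup>2 = 0"
      using integral_nonneg_eq_0_iff_AE[OF D2_int] unfolding V_def by simp
    hence "(\<integral>\<omega>. (D \<omega>)\<^sup>2 * Y \<omega> \<partial>M) = (\<integral>\<omega>. 0 \<partial>M)"
      by (intro integral_cong_AE) auto
    thus ?thesis using True unfolding V_def by simp
  next
    case False
    hence V: "V > 0"
      unfolding V_def by (simp add: order_less_le)
    have "(\<integral>\<omega>. (D \<omega>)\<^sup>2 * Y \<omega> \<partial>M) \<le> (\<integral>\<omega>. (1 / V) / 2 * (D \<omega>) ^ 4 + (Y \<omega>)\<^sup>2 / (2 * (1 / V)) \<partial>M)"
    proof (rule integral_mono[OF DY_int])
      show "integrable M (\<lambda>\<omega>. (1 / V) / 2 * (D \<omega>) ^ 4 + (Y \<omega>)\<^sup>2 / (2 * (1 / V)))"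
        using D4_int Y2_int by auto
      show "(D \<omega>)\<^sup>2 * Y \<omega> \<le> (1 / V) / 2 * (D \<omega>) ^ 4 + (Y \<omega>)\<^sup>2 / (2 * (1 / V))" for \<omega>
        using order_trans[OF abs_ge_self abs_mult_le_weighted_squares[of "1 / V" "(D \<omega>)\<^sup>2" "Y \<omega>"]] V
        by (simp add: D4)
    qed
    also have "\<dots> = (1 / V) / 2 * (\<integral>\<omega>. (D \<omega>) ^ 4 \<partial>M) + V / 2 * (\<integral>\<omega>. (Y \<omega>)\<^sup>2 \<partial>M)"
      using D4_int Y2_int by (simp add: field_simps)
    also have "\<dots> \<le> (1 / V) / 2 * (a * V\<^sup>2) + V / 2 * b"
      using D4_le Y2_le V unfolding V_def[symmetric] by (intro add_mono mult_left_mono) auto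
    also have "\<dots> = V * (a + b) / 2"
      using V by (simp add: field_simps power2_eq_square)
    finally show ?thesis
      unfolding V_def .
  qed
qed

lemma (in prob_space) AE_tendsto_0_of_summable_expectation_square:
  fixes f :: "nat \<Rightarrow> 'a \<Rightarrow> real"
  assumes [measurable]: "\<And>n. f n \<in> borel_measurable M"
    and f: "\<And>n. integrable M (\<lambda>\<omega>. (f n \<omega>)\<^sup>2)"
    and summable: "summable (\<lambda>n. \<integral>\<omega>. (f n \<omega>)\<^sup>2 \<partial>M)"
  shows "AE \<omega> in M. (\<lambda>n. f n \<omega>) \<longlonglongrightarrow> 0"
proof -
  have "(\<integral>\<^sup>+\<omega>. (\<Sum>n. ennreal ((f n \<omega>)\<^sup>2)) \<partial>M) = (\<Sum>n. \<integral>\<^sup>+\<omega>. ennreal ((f n \<omega>)\<^sup>2) \<partial>M)"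
    by (rule nn_integral_suminf) measurable
  also have "\<dots> = (\<Sum>n. ennreal (\<integral>\<omega>. (f n \<omega>)\<^sup>2 \<partial>M))"
    by (intro arg_cong[where f=suminf] ext nn_integral_eq_integral f) simp
  also have "\<dots> \<noteq> \<infinity>"
    unfolding infinity_ennreal_def by (rule ennreal_suminf_neq_top[OF summable]) simp
  finally have "AE \<omega> in M. (\<Sum>n. ennreal ((f n \<omega>)\<^sup>2)) \<noteq> \<infinity>"
    by (intro nn_integral_PInf_AE) measurable
  moreover have "(\<lambda>n. f n \<omega>) \<longlonglongrightarrow> 0" if "(\<Sum>n. ennreal ((f n \<omega>)\<^sup>2)) \<noteq> \<infinity>" for \<omega>
  proof -
    have "summable (\<lambda>n. (f n \<omega>)\<^sup>2)"
      using that by (intro summable_suminf_not_top) auto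
    hence "(\<lambda>n. sqrt ((f n \<omega>)\<^sup>2)) \<longlonglongrightarrow> sqrt 0"
      by (intro tendsto_intros summable_LIMSEQ_zero)
    thus ?thesis
      by (simp add: tendsto_rabs_zero_iff)
  qed
  ultimately show ?thesis
    by auto
qed

section \<open>Second-order theory of the Karhunen-Loeve expansion\<close>

locale KL_expansion = prob_space M for M :: "'a measure" +
  fixes X :: "real \<Rightarrow> 'a \<Rightarrow> real" and e :: "nat \<Rightarrow> real \<Rightarrow> real" and lam :: "nat \<Rightarrow> real"
  assumes X_joint_measurable:
      "(\<lambda>(t, \<omega>). indicator {0..1} t * X t \<omega>) \<in> borel_measurable (lborel \<Otimes>\<^sub>M M)"
    and X_measurable: "t \<in> {0..1} \<Longrightarrow> X t \<in> borel_measurable M"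
    and X_square_integrable: "t \<in> {0..1} \<Longrightarrow> integrable M (\<lambda>\<omega>. (X t \<omega>)\<^sup>2)"
    and cov_continuous: "continuous_on ({0..1} \<times> {0..1}) (\<lambda>(s, t). cov_fun M X s t)"
    and e_measurable: "e k \<in> borel_measurable lborel"
    and e_continuous: "continuous_on {0..1} (e k)"
    and e_orthonormal: "set_integrable lborel {0..1} (\<lambda>s. e i s * e j s)"
      "(LINT s:{0..1}|lborel. e i s * e j s) = (if i = j then 1 else 0)"
    and e_eigen: "t \<in> {0..1} \<Longrightarrow> (LINT s:{0..1}|lborel. cov_fun M X s t * e k s) = lam k * e k t"
    and e_complete: "f \<in> borel_measurable lborel \<Longrightarrow>
      set_integrable lborel {0..1} (\<lambda>s. (f s)\<^sup>2) \<Longrightarrow>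
      (\<And>k. (LINT s:{0..1}|lborel. f s * e k s) = 0) \<Longrightarrow>
      t \<in> {0..1} \<Longrightarrow> (LINT s:{0..1}|lborel. cov_fun M X s t * f s) = 0"
    and lam_nonneg: "lam k \<ge> 0"
    and Z_square_integrable: "integrable M (\<lambda>\<omega>. (KL_coeff X e k \<omega>)\<^sup>2)"
begin

abbreviation "I \<equiv> {0..1::real}"
abbreviation "cov \<equiv> cov_fun M X"
abbreviation "Z \<equiv> KL_coeff X e"

lemma X_borel[measurable]: "t \<in> I \<Longrightarrow> X t \<in> borel_measurable M"
  by (rule X_measurable)

lemma e_borel[measurable]: "e k \<in> borel_measurable borel"
  using e_measurable by simp

lemma Z_borel[measurable]: "Z k \<in> borel_measurable M"
proof -
  have "(\<lambda>(\<omega>, t). indicator I t * X t \<omega>) \<in> borel_measurable (M \<Otimes>\<^sub>M lborel)"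
    using X_joint_measurable measurable_pair_swap_iff by force
  hence "(\<lambda>(\<omega>, t). indicator I t * X t \<omega> * e k t) \<in> borel_measurable (M \<Otimes>\<^sub>M lborel)"
    by measurable
  hence "(\<lambda>\<omega>. \<integral>t. indicator I t * X t \<omega> * e k t \<partial>lborel) \<in> borel_measurable M"
    by (rule lborel.borel_measurable_lebesgue_integral)
  moreover have "Z k = (\<lambda>\<omega>. \<integral>t. indicator I t * X t \<omega> * e k t \<partial>lborel)"
    by (simp add: fun_eq_iff KL_coeff_def set_lebesgue_integral_def mult.assoc)
  ultimately show ?thesis
    by simp
qed

lemma cov_commute: "cov s t = cov t s"
  unfolding cov_fun_def by (simp add: mult.commute)

lemma cov_diag: "cov t t = (\<integral>\<omega>. (X t \<omega>)\<^sup>2 \<partial>M)"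
  unfolding cov_fun_def by (simp add: power2_eq_square)

lemma continuous_on_cov_diag: "continuous_on I (\<lambda>t. cov t t)"
proof -
  have "continuous_on I ((\<lambda>(s, t). cov s t) \<circ> (\<lambda>t. (t, t)))"
    by (intro continuous_on_compose continuous_intros continuous_on_subset[OF cov_continuous]) auto
  thus ?thesis by (simp add: o_def)
qed

lemma continuous_on_cov_left: "t \<in> I \<Longrightarrow> continuous_on I (\<lambda>s. cov s t)"
proof -
  assume t: "t \<in> I"
  have "continuous_on I ((\<lambda>(s, t). cov s t) \<circ> (\<lambda>s. (s, t)))"
    using t by (intro continuous_on_compose continuous_intros continuous_on_subset[OF cov_continuous]) auto
  thus ?thesis by (simp add: o_def)
qed

definition var_bound :: real where
  "var_bound = (SUP t\<in>I. cov t t)"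

lemma cov_diag_le_var_bound: "t \<in> I \<Longrightarrow> cov t t \<le> var_bound"
  unfolding var_bound_def
  using compact_imp_bounded[OF compact_continuous_image[OF continuous_on_cov_diag]]
  by (intro cSUP_upper bounded_imp_bdd_above) auto

lemma var_bound_nonneg: "var_bound \<ge> 0"
proof -
  have "0 \<le> cov 0 0" unfolding cov_diag by simp
  thus ?thesis using cov_diag_le_var_bound[of 0] by simp
qed

lemma integrable_square_X_diff: "s \<in> I \<Longrightarrow> t \<in> I \<Longrightarrow> integrable M (\<lambda>\<omega>. (X t \<omega> - X s \<omega>)\<^sup>2)"
  by (intro integrable_square_diff X_borel X_square_integrable)

lemma set_integrable_e: "set_integrable lborel I (e k)"
  using set_integrable_continuous_mult[OF compact_Icc e_continuous, of "\<lambda>_. 1" k]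
  by (simp add: set_integrable_def integrable_indicator_iff)

lemma expectation_abs_X_mult_le:
  assumes t: "t \<in> I" and [measurable]: "W \<in> borel_measurable M"
    and W: "integrable M (\<lambda>\<omega>. (W \<omega>)\<^sup>2)"
  shows "(\<integral>\<omega>. \<bar>X t \<omega> * W \<omega>\<bar> \<partial>M) \<le> (var_bound + (\<integral>\<omega>. (W \<omega>)\<^sup>2 \<partial>M)) / 2"
proof -
  have "(\<integral>\<omega>. \<bar>X t \<omega> * W \<omega>\<bar> \<partial>M) \<le> (\<integral>\<omega>. ((X t \<omega>)\<^sup>2 + (W \<omega>)\<^sup>2) / 2 \<partial>M)"
    using t W X_square_integrable
    by (intro integral_mono integrable_abs integrable_mult_of_square_integrable abs_mult_le_half_squares)
       auto
  also have "\<dots> = (cov t t + (\<integral>\<omega>. (W \<omega>)\<^sup>2 \<partial>M)) / 2"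
    using t W X_square_integrable by (simp add: cov_diag)
  also have "\<dots> \<le> (var_bound + (\<integral>\<omega>. (W \<omega>)\<^sup>2 \<partial>M)) / 2"
    using cov_diag_le_var_bound[OF t] by simp
  finally show ?thesis .
qed

lemma integrable_KL_Fubini_integrand:
  assumes [measurable]: "W \<in> borel_measurable M" and W: "integrable M (\<lambda>\<omega>. (W \<omega>)\<^sup>2)"
  shows "integrable (lborel \<Otimes>\<^sub>M M) (\<lambda>(u, \<omega>). indicator I u * (X u \<omega> * e k u) * W \<omega>)"
    (is "integrable _ (case_prod ?F)")
proof -
  interpret pair_sigma_finite lborel M ..
  define C where "C = (var_bound + (\<integral>\<omega>. (W \<omega>)\<^sup>2 \<partial>M)) / 2"
  have XI[measurable]: "(\<lambda>(t, \<omega>). indicator I t * X t \<omega>) \<in> borel_measurable (lborel \<Otimes>\<^sub>M M)"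
    by (rule X_joint_measurable)
  have "(\<lambda>p. (case p of (t, \<omega>) \<Rightarrow> indicator I t * X t \<omega>) * e k (fst p) * W (snd p))
      \<in> borel_measurable (lborel \<Otimes>\<^sub>M M)"
    by measurable
  moreover have "case_prod ?F
      = (\<lambda>p. (case p of (t, \<omega>) \<Rightarrow> indicator I t * X t \<omega>) * e k (fst p) * W (snd p))"
    by (auto simp: fun_eq_iff)
  ultimately have Fm[measurable]: "case_prod ?F \<in> borel_measurable (lborel \<Otimes>\<^sub>M M)"
    by simp
  have XW: "u \<in> I \<Longrightarrow> integrable M (\<lambda>\<omega>. X u \<omega> * W \<omega>)" for u
    using W X_square_integrable by (intro integrable_mult_of_square_integrable) auto
  have F_eq: "?F u \<omega> = (indicator I u * e k u) * (X u \<omega> * W \<omega>)" for u \<omega>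
    by simp
  have section_integrable: "integrable M (\<lambda>\<omega>. ?F u \<omega>)" for u
    unfolding F_eq using XW[of u] by (cases "u \<in> I") auto
  have section_norm: "(\<integral>\<omega>. norm (?F u \<omega>) \<partial>M) \<le> indicator I u * \<bar>e k u\<bar> * C" for u
  proof (cases "u \<in> I")
    case True
    have "norm (?F u \<omega>) = \<bar>e k u\<bar> * \<bar>X u \<omega> * W \<omega>\<bar>" for \<omega>
      unfolding F_eq using True by (simp add: abs_mult)
    hence "(\<integral>\<omega>. norm (?F u \<omega>) \<partial>M) = \<bar>e k u\<bar> * (\<integral>\<omega>. \<bar>X u \<omega> * W \<omega>\<bar> \<partial>M)"
      by simp
    also have "\<dots> \<le> \<bar>e k u\<bar> * C"
      unfolding C_def using expectation_abs_X_mult_le[OF True _ W] by (intro mult_left_mono) auto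
    finally show ?thesis using True by simp
  qed simp
  have "integrable lborel (\<lambda>u. indicator I u * \<bar>e k u\<bar> * C)"
    using integrable_abs[OF set_integrable_e[of k, unfolded set_integrable_def]]
    by (intro integrable_mult_left) (simp add: abs_mult)
  hence "integrable lborel (\<lambda>u. \<integral>\<omega>. norm (?F u \<omega>) \<partial>M)"
    by (rule Bochner_Integration.integrable_bound)
      (use section_norm in \<open>auto intro!: AE_I2 order_trans[OF _ abs_ge_self]\<close>)
  thus ?thesis
    using section_integrable by (intro Fubini_integrable[OF Fm]) auto
qed

lemma KL_coeff_Fubini:
  assumes [measurable]: "W \<in> borel_measurable M" and W: "integrable M (\<lambda>\<omega>. (W \<omega>)\<^sup>2)"
  shows "integrable M (\<lambda>\<omega>. W \<omega> * Z k \<omega>)"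
    and "set_integrable lborel I (\<lambda>u. (\<integral>\<omega>. W \<omega> * X u \<omega> \<partial>M) * e k u)"
    and "(\<integral>\<omega>. W \<omega> * Z k \<omega> \<partial>M) = (LINT u:I|lborel. (\<integral>\<omega>. W \<omega> * X u \<omega> \<partial>M) * e k u)"
proof -
  interpret pair_sigma_finite lborel M ..
  define F where "F = (\<lambda>u \<omega>. indicator I u * (X u \<omega> * e k u) * W \<omega>)"
  have F: "integrable (lborel \<Otimes>\<^sub>M M) (case_prod F)"
    unfolding F_def by (rule integrable_KL_Fubini_integrand[OF _ W]) simp
  have inner_lborel: "(\<integral>u. F u \<omega> \<partial>lborel) = W \<omega> * Z k \<omega>" for \<omega>
    unfolding F_def KL_coeff_def set_lebesgue_integral_def by (simp add: mult.commute)
  have inner_M: "(\<integral>\<omega>. F u \<omega> \<partial>M) = indicator I u *\<^sub>R ((\<integral>\<omega>. W \<omega> * X u \<omega> \<partial>M) * e k u)" for u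
  proof -
    have "F u \<omega> = (indicator I u * e k u) * (W \<omega> * X u \<omega>)" for \<omega>
      unfolding F_def by simp
    thus ?thesis by simp
  qed
  show "integrable M (\<lambda>\<omega>. W \<omega> * Z k \<omega>)"
    using integrable_snd[OF F] unfolding inner_lborel .
  show "set_integrable lborel I (\<lambda>u. (\<integral>\<omega>. W \<omega> * X u \<omega> \<partial>M) * e k u)"
    using integrable_fst[OF F] unfolding inner_M set_integrable_def .
  show "(\<integral>\<omega>. W \<omega> * Z k \<omega> \<partial>M) = (LINT u:I|lborel. (\<integral>\<omega>. W \<omega> * X u \<omega> \<partial>M) * e k u)"
    using Fubini_integral[OF F] unfolding inner_lborel inner_M set_lebesgue_integral_def .
qed

lemma expectation_X_mult_Z:
  assumes t: "t \<in> I"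
  shows "integrable M (\<lambda>\<omega>. X t \<omega> * Z k \<omega>)" "(\<integral>\<omega>. X t \<omega> * Z k \<omega> \<partial>M) = lam k * e k t"
proof -
  show "integrable M (\<lambda>\<omega>. X t \<omega> * Z k \<omega>)"
    using t by (intro KL_coeff_Fubini(1) X_square_integrable) auto
  have "(\<integral>\<omega>. X t \<omega> * Z k \<omega> \<partial>M) = (LINT u:I|lborel. (\<integral>\<omega>. X t \<omega> * X u \<omega> \<partial>M) * e k u)"
    using t by (intro KL_coeff_Fubini(3) X_square_integrable) auto
  also have "\<dots> = (LINT u:I|lborel. cov u t * e k u)"
    by (simp add: cov_fun_def[symmetric] cov_commute[of t])
  also have "\<dots> = lam k * e k t"
    using e_eigen t by auto
  finally show "(\<integral>\<omega>. X t \<omega> * Z k \<omega> \<partial>M) = lam k * e k t" .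
qed

lemma expectation_Z_mult_Z:
  shows "integrable M (\<lambda>\<omega>. Z i \<omega> * Z j \<omega>)"
    and "(\<integral>\<omega>. Z i \<omega> * Z j \<omega> \<partial>M) = (if i = j then lam j else 0)"
proof -
  show "integrable M (\<lambda>\<omega>. Z i \<omega> * Z j \<omega>)"
    by (intro KL_coeff_Fubini(1) Z_square_integrable) simp
  have "(\<integral>\<omega>. Z i \<omega> * Z j \<omega> \<partial>M) = (LINT u:I|lborel. (\<integral>\<omega>. Z i \<omega> * X u \<omega> \<partial>M) * e j u)"
    by (intro KL_coeff_Fubini(3) Z_square_integrable) simp
  also have "\<dots> = (LINT u:I|lborel. lam i * (e i u * e j u))"
    using expectation_X_mult_Z(2)
    by (intro set_lebesgue_integral_cong) (auto simp: mult.commute)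
  also have "\<dots> = (if i = j then lam j else 0)"
    using e_orthonormal by auto
  finally show "(\<integral>\<omega>. Z i \<omega> * Z j \<omega> \<partial>M) = (if i = j then lam j else 0)" .
qed

lemma expectation_square_sum_Z:
  assumes "finite F"
  shows "integrable M (\<lambda>\<omega>. (\<Sum>k\<in>F. Z k \<omega> * a k)\<^sup>2)"
    and "(\<integral>\<omega>. (\<Sum>k\<in>F. Z k \<omega> * a k)\<^sup>2 \<partial>M) = (\<Sum>k\<in>F. lam k * (a k)\<^sup>2)"
proof -
  have eq: "(\<Sum>k\<in>F. Z k \<omega> * a k)\<^sup>2 = (\<Sum>i\<in>F. \<Sum>j\<in>F. (a i * a j) * (Z i \<omega> * Z j \<omega>))" for \<omega>
    by (simp add: power2_eq_square sum_product algebra_simps)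
  show "integrable M (\<lambda>\<omega>. (\<Sum>k\<in>F. Z k \<omega> * a k)\<^sup>2)"
    unfolding eq by (intro Bochner_Integration.integrable_sum integrable_mult_right expectation_Z_mult_Z(1))
  have "(\<integral>\<omega>. (\<Sum>k\<in>F. Z k \<omega> * a k)\<^sup>2 \<partial>M)
      = (\<Sum>i\<in>F. \<Sum>j\<in>F. (a i * a j) * (if i = j then lam j else 0))"
    unfolding eq by (simp add: integral_sum integrable_sum expectation_Z_mult_Z)
  also have "\<dots> = (\<Sum>k\<in>F. lam k * (a k)\<^sup>2)"
    using assms by (simp add: power2_eq_square algebra_simps if_distrib sum.delta cong: if_cong)
  finally show "(\<integral>\<omega>. (\<Sum>k\<in>F. Z k \<omega> * a k)\<^sup>2 \<partial>M) = (\<Sum>k\<in>F. lam k * (a k)\<^sup>2)" .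
qed

text \<open>
  Under the hypothesis on \<open>W\<close>, the sum over \<open>F\<close> is the orthogonal projection of \<open>W\<close> onto the span
  of the \<open>Z\<^sub>k\<close>, \<open>k \<in> F\<close>; the formula is Pythagoras.
\<close>

lemma expectation_square_sum_Z_diff:
  assumes [measurable]: "W \<in> borel_measurable M" and W: "integrable M (\<lambda>\<omega>. (W \<omega>)\<^sup>2)"
    and F: "finite F" and WZ: "\<And>k. k \<in> F \<Longrightarrow> (\<integral>\<omega>. W \<omega> * Z k \<omega> \<partial>M) = lam k * a k"
  shows "integrable M (\<lambda>\<omega>. ((\<Sum>k\<in>F. Z k \<omega> * a k) - W \<omega>)\<^sup>2)"
    and "(\<integral>\<omega>. ((\<Sum>k\<in>F. Z k \<omega> * a k) - W \<omega>)\<^sup>2 \<partial>M)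
      = (\<integral>\<omega>. (W \<omega>)\<^sup>2 \<partial>M) - (\<Sum>k\<in>F. lam k * (a k)\<^sup>2)"
proof -
  have eq: "((\<Sum>k\<in>F. Z k \<omega> * a k) - W \<omega>)\<^sup>2
      = (\<Sum>k\<in>F. Z k \<omega> * a k)\<^sup>2 - 2 * (\<Sum>k\<in>F. a k * (W \<omega> * Z k \<omega>)) + (W \<omega>)\<^sup>2" for \<omega>
    by (simp add: power2_eq_square sum_distrib_left algebra_simps)
  have WZ_int: "integrable M (\<lambda>\<omega>. W \<omega> * Z k \<omega>)" for k
    by (rule KL_coeff_Fubini(1)[OF _ W]) simp
  have cross: "integrable M (\<lambda>\<omega>. \<Sum>k\<in>F. a k * (W \<omega> * Z k \<omega>))"
    by (intro Bochner_Integration.integrable_sum integrable_mult_right WZ_int)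
  show "integrable M (\<lambda>\<omega>. ((\<Sum>k\<in>F. Z k \<omega> * a k) - W \<omega>)\<^sup>2)"
    unfolding eq using expectation_square_sum_Z(1)[OF F] cross W by auto
  have "(\<integral>\<omega>. ((\<Sum>k\<in>F. Z k \<omega> * a k) - W \<omega>)\<^sup>2 \<partial>M)
      = (\<Sum>k\<in>F. lam k * (a k)\<^sup>2) - 2 * (\<Sum>k\<in>F. a k * (lam k * a k)) + (\<integral>\<omega>. (W \<omega>)\<^sup>2 \<partial>M)"
    unfolding eq using expectation_square_sum_Z[OF F] cross W WZ_int
    by (simp add: integral_sum integrable_sum WZ)
  also have "\<dots> = (\<integral>\<omega>. (W \<omega>)\<^sup>2 \<partial>M) - (\<Sum>k\<in>F. lam k * (a k)\<^sup>2)"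
    by (simp add: power2_eq_square algebra_simps)
  finally show "(\<integral>\<omega>. ((\<Sum>k\<in>F. Z k \<omega> * a k) - W \<omega>)\<^sup>2 \<partial>M)
      = (\<integral>\<omega>. (W \<omega>)\<^sup>2 \<partial>M) - (\<Sum>k\<in>F. lam k * (a k)\<^sup>2)" .
qed

lemma sum_lam_square_le_expectation_square:
  assumes [measurable]: "W \<in> borel_measurable M" and W: "integrable M (\<lambda>\<omega>. (W \<omega>)\<^sup>2)"
    and F: "finite F" and WZ: "\<And>k. k \<in> F \<Longrightarrow> (\<integral>\<omega>. W \<omega> * Z k \<omega> \<partial>M) = lam k * a k"
  shows "(\<Sum>k\<in>F. lam k * (a k)\<^sup>2) \<le> (\<integral>\<omega>. (W \<omega>)\<^sup>2 \<partial>M)"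
  using expectation_square_sum_Z_diff(2)[OF assms]
    integral_nonneg_AE[of "\<lambda>\<omega>. ((\<Sum>k\<in>F. Z k \<omega> * a k) - W \<omega>)\<^sup>2" M]
  by simp

definition KL_residual :: "nat \<Rightarrow> real \<Rightarrow> real" where
  "KL_residual L t = (\<integral>\<omega>. ((\<Sum>k<L. Z k \<omega> * e k t) - X t \<omega>)\<^sup>2 \<partial>M)"

lemma integrable_KL_residual:
  "t \<in> I \<Longrightarrow> integrable M (\<lambda>\<omega>. ((\<Sum>k<L. Z k \<omega> * e k t) - X t \<omega>)\<^sup>2)"
  by (rule expectation_square_sum_Z_diff(1)) (auto simp: X_square_integrable expectation_X_mult_Z)

lemma KL_residual_eq: "t \<in> I \<Longrightarrow> KL_residual L t = cov t t - (\<Sum>k<L. lam k * (e k t)\<^sup>2)"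
  unfolding KL_residual_def cov_diag
  by (rule expectation_square_sum_Z_diff(2)) (auto simp: X_square_integrable expectation_X_mult_Z)

lemma Bessel_inequality: "t \<in> I \<Longrightarrow> (\<Sum>k<L. lam k * (e k t)\<^sup>2) \<le> cov t t"
  unfolding cov_diag
  by (rule sum_lam_square_le_expectation_square) (auto simp: X_square_integrable expectation_X_mult_Z)

subsection \<open>Mercer's theorem on the diagonal\<close>

lemma summable_eigen_diag: "t \<in> I \<Longrightarrow> summable (\<lambda>k. lam k * (e k t)\<^sup>2)"
  by (rule summableI_nonneg_bounded[where x="cov t t"]) (auto simp: lam_nonneg Bessel_inequality)

definition eigen_diag_tail :: "real \<Rightarrow> nat \<Rightarrow> real" where
  "eigen_diag_tail t n = (\<Sum>m. lam (m + n) * (e (m + n) t)\<^sup>2)"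

lemma eigen_diag_tail_eq:
  "t \<in> I \<Longrightarrow> eigen_diag_tail t n = (\<Sum>k. lam k * (e k t)\<^sup>2) - (\<Sum>k<n. lam k * (e k t)\<^sup>2)"
  unfolding eigen_diag_tail_def using suminf_minus_initial_segment[OF summable_eigen_diag] by simp

lemma eigen_diag_tail_le_var_bound: "t \<in> I \<Longrightarrow> eigen_diag_tail t n \<le> var_bound"
proof -
  assume t: "t \<in> I"
  have "eigen_diag_tail t n \<le> (\<Sum>k. lam k * (e k t)\<^sup>2)"
    unfolding eigen_diag_tail_eq[OF t] using lam_nonneg by (simp add: sum_nonneg)
  also have "\<dots> \<le> cov t t"
    by (rule suminf_le_const[OF summable_eigen_diag[OF t] Bessel_inequality[OF t]])
  also have "\<dots> \<le> var_bound"
    by (rule cov_diag_le_var_bound[OF t])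
  finally show ?thesis .
qed

lemma eigen_diag_tail_tendsto_0:
  assumes t: "t \<in> I"
  shows "eigen_diag_tail t \<longlonglongrightarrow> 0"
proof -
  have "eigen_diag_tail t = (\<lambda>n. (\<Sum>k. lam k * (e k t)\<^sup>2) - (\<Sum>k<n. lam k * (e k t)\<^sup>2))"
    using eigen_diag_tail_eq[OF t] by (simp add: fun_eq_iff)
  thus ?thesis
    using tendsto_diff[OF tendsto_const summable_LIMSEQ[OF summable_eigen_diag[OF t]],
        of "\<Sum>k. lam k * (e k t)\<^sup>2"] by simp
qed

definition mercer_partial :: "real \<Rightarrow> nat \<Rightarrow> real \<Rightarrow> real" where
  "mercer_partial t n s = (\<Sum>k<n. lam k * e k t * e k s)"

definition mercer_kernel :: "real \<Rightarrow> real \<Rightarrow> real" where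
  "mercer_kernel t s = (\<Sum>k. lam k * e k t * e k s)"

lemma abs_eigen_term_le:
  "d > 0 \<Longrightarrow> \<bar>lam k * e k t * e k s\<bar> \<le> d / 2 * (lam k * (e k s)\<^sup>2) + lam k * (e k t)\<^sup>2 / (2 * d)"
  using mult_left_mono[OF abs_mult_le_weighted_squares[of d "e k s" "e k t"] lam_nonneg[of k]]
  by (simp add: abs_mult lam_nonneg algebra_simps)

lemma summable_eigen_bound:
  "t \<in> I \<Longrightarrow> s \<in> I \<Longrightarrow>
    summable (\<lambda>k. d / 2 * (lam k * (e k s)\<^sup>2) + lam k * (e k t)\<^sup>2 / (2 * d))"
  by (intro summable_add summable_mult summable_divide summable_eigen_diag)

lemma summable_mercer_series:
  assumes "t \<in> I" "s \<in> I"
  shows "summable (\<lambda>k. lam k * e k t * e k s)"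
  by (rule summable_comparison_test'[where N=0, OF summable_eigen_bound[OF assms, of 1]])
    (use abs_eigen_term_le[OF zero_less_one] in simp)

lemma abs_mercer_kernel_diff_le:
  assumes t: "t \<in> I" and s: "s \<in> I" and d: "d > 0"
  shows "\<bar>mercer_kernel t s - mercer_partial t n s\<bar> \<le> d / 2 * var_bound + eigen_diag_tail t n / (2 * d)"
proof -
  let ?a = "\<lambda>k. lam k * e k t * e k s"
  let ?b = "\<lambda>k. d / 2 * (lam k * (e k s)\<^sup>2) + lam k * (e k t)\<^sup>2 / (2 * d)"
  have b: "summable (\<lambda>m. ?b (m + n))"
    by (rule summable_ignore_initial_segment[OF summable_eigen_bound[OF t s]])
  have ab: "\<bar>?a (m + n)\<bar> \<le> ?b (m + n)" for m
    by (rule abs_eigen_term_le[OF d])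
  have a: "summable (\<lambda>m. \<bar>?a (m + n)\<bar>)"
    using ab by (intro summable_comparison_test'[where N=0, OF b]) auto
  have s_tail: "summable (\<lambda>m. lam (m + n) * (e (m + n) s)\<^sup>2)"
    by (rule summable_ignore_initial_segment[OF summable_eigen_diag[OF s]])
  have t_tail: "summable (\<lambda>m. lam (m + n) * (e (m + n) t)\<^sup>2)"
    by (rule summable_ignore_initial_segment[OF summable_eigen_diag[OF t]])
  have "mercer_kernel t s - mercer_partial t n s = (\<Sum>m. ?a (m + n))"
    unfolding mercer_kernel_def mercer_partial_def
    using suminf_split_initial_segment[OF summable_mercer_series[OF t s], of n] by simp
  also have "\<bar>\<dots>\<bar> \<le> (\<Sum>m. \<bar>?a (m + n)\<bar>)"
    by (rule summable_rabs[OF a])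
  also have "\<dots> \<le> (\<Sum>m. ?b (m + n))"
    by (rule suminf_le[OF ab a b])
  also have "\<dots> = (\<Sum>m. d / 2 * (lam (m + n) * (e (m + n) s)\<^sup>2))
      + (\<Sum>m. lam (m + n) * (e (m + n) t)\<^sup>2 / (2 * d))"
    by (intro suminf_add[symmetric] summable_mult summable_divide s_tail t_tail)
  also have "\<dots> = d / 2 * eigen_diag_tail s n + eigen_diag_tail t n / (2 * d)"
    unfolding eigen_diag_tail_def using s_tail t_tail by (simp add: suminf_mult suminf_divide)
  also have "\<dots> \<le> d / 2 * var_bound + eigen_diag_tail t n / (2 * d)"
    using eigen_diag_tail_le_var_bound[OF s, of n] d by simp
  finally show ?thesis .
qed

lemma uniform_limit_mercer_partial:
  assumes t: "t \<in> I"
  shows "uniform_limit I (mercer_partial t) (mercer_kernel t) sequentially"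
  unfolding uniform_limit_sequentially_iff
proof (intro allI impI)
  fix r :: real assume r: "r > 0"
  define d where "d = r / (var_bound + 1)"
  have d: "d > 0" "d / 2 * var_bound < r / 2"
    unfolding d_def using r var_bound_nonneg by (simp_all add: field_simps)
  then obtain N where N: "\<forall>n\<ge>N. \<bar>eigen_diag_tail t n\<bar> < d * r"
    using LIMSEQ_D[OF eigen_diag_tail_tendsto_0[OF t], of "d * r"] r by auto
  have "dist (mercer_partial t n s) (mercer_kernel t s) < r" if "n \<ge> N" "s \<in> I" for n s
  proof -
    have "eigen_diag_tail t n / (2 * d) < d * r / (2 * d)"
      using N that d by (intro divide_strict_right_mono) auto
    hence "eigen_diag_tail t n / (2 * d) < r / 2"
      using d by simp
    thus ?thesis
      using abs_mercer_kernel_diff_le[OF t \<open>s \<in> I\<close> d(1), of n] d(2)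
      by (simp add: dist_real_def abs_minus_commute)
  qed
  thus "\<exists>N. \<forall>n\<ge>N. \<forall>s\<in>I. dist (mercer_partial t n s) (mercer_kernel t s) < r"
    by blast
qed

lemma continuous_on_mercer_partial: "continuous_on I (mercer_partial t n)"
  unfolding mercer_partial_def by (intro continuous_intros e_continuous)

lemma continuous_on_mercer_kernel: "t \<in> I \<Longrightarrow> continuous_on I (mercer_kernel t)"
  by (rule uniform_limit_theorem[OF _ uniform_limit_mercer_partial])
     (auto simp: continuous_on_mercer_partial)

lemma set_integral_mercer_partial_mult:
  assumes h: "\<And>k. set_integrable lborel I (\<lambda>s. e k s * h s)"
  shows "(LINT s:I|lborel. mercer_partial t n s * h s)
    = (\<Sum>k<n. lam k * e k t * (LINT s:I|lborel. e k s * h s))"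
proof -
  have "(\<lambda>s. indicator I s *\<^sub>R (mercer_partial t n s * h s))
      = (\<lambda>s. \<Sum>k<n. (lam k * e k t) * (indicator I s *\<^sub>R (e k s * h s)))"
    by (auto simp: fun_eq_iff mercer_partial_def sum_distrib_left sum_distrib_right algebra_simps)
  moreover have "integrable lborel (\<lambda>s. (lam k * e k t) * (indicator I s *\<^sub>R (e k s * h s)))" for k
    using h[of k] unfolding set_integrable_def by (rule integrable_mult_right)
  ultimately show ?thesis
    unfolding set_lebesgue_integral_def by simp
qed

lemma set_integral_mercer_kernel_mult:
  assumes t: "t \<in> I" and h: "continuous_on I h"
  shows "(\<lambda>n. \<Sum>k<n. lam k * e k t * (LINT s:I|lborel. e k s * h s))
    \<longlonglongrightarrow> (LINT s:I|lborel. mercer_kernel t s * h s)"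
proof -
  have h_int: "set_integrable lborel I h"
    using set_integrable_continuous_mult[OF compact_Icc h, of "\<lambda>_. 1"]
    by (simp add: set_integrable_def integrable_indicator_iff)
  have "set_integrable lborel I (\<lambda>s. e k s * h s)" for k
    by (rule set_integrable_continuous_mult[OF compact_Icc e_continuous h_int])
  thus ?thesis
    using tendsto_set_integral_uniform_limit_mult[OF compact_Icc uniform_limit_mercer_partial[OF t]
        continuous_on_mercer_partial continuous_on_mercer_kernel[OF t] h_int]
    by (simp add: set_integral_mercer_partial_mult)
qed

lemma set_integral_mercer_kernel_mult_e:
  assumes t: "t \<in> I"
  shows "(LINT s:I|lborel. mercer_kernel t s * e k s) = lam k * e k t"
proof -
  have "(\<lambda>n. \<Sum>j<n. lam j * e j t * (LINT s:I|lborel. e j s * e k s)) \<longlonglongrightarrow> lam k * e k t"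
  proof (rule tendsto_eventually)
    have "(\<Sum>j<n. lam j * e j t * (LINT s:I|lborel. e j s * e k s)) = lam k * e k t" if "n > k" for n
      using that by (simp add: e_orthonormal if_distrib sum.delta cong: if_cong)
    thus "\<forall>\<^sub>F n in sequentially. (\<Sum>j<n. lam j * e j t * (LINT s:I|lborel. e j s * e k s)) = lam k * e k t"
      unfolding eventually_sequentially by (intro exI[of _ "Suc k"]) auto
  qed
  with set_integral_mercer_kernel_mult[OF t e_continuous] show ?thesis
    by (rule LIMSEQ_unique)
qed

lemma set_integral_mercer_kernel_mult_eq_0:
  assumes t: "t \<in> I" and f: "continuous_on I f" and orth: "\<And>k. (LINT s:I|lborel. f s * e k s) = 0"
  shows "(LINT s:I|lborel. mercer_kernel t s * f s) = 0"
  using set_integral_mercer_kernel_mult[OF t f] orth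
  by (simp add: mult.commute LIMSEQ_const_iff)

lemma set_integral_cov_mult_eq_0:
  assumes t: "t \<in> I" and f: "continuous_on I f" and orth: "\<And>k. (LINT s:I|lborel. f s * e k s) = 0"
  shows "(LINT s:I|lborel. cov s t * f s) = 0"
proof -
  define g where "g s = indicator I s * f s" for s
  have f_int: "set_integrable lborel I f"
    using set_integrable_continuous_mult[OF compact_Icc f, of "\<lambda>_. 1"]
    by (simp add: set_integrable_def integrable_indicator_iff)
  have on_I: "(LINT s:I|lborel. h s * g s) = (LINT s:I|lborel. h s * f s)" for h
    by (rule set_lebesgue_integral_cong) (auto simp: g_def)
  have "g \<in> borel_measurable lborel"
    unfolding g_def using borel_measurable_continuous_on_indicator[OF _ f] by simp
  moreover have "set_integrable lborel I (\<lambda>s. (g s)\<^sup>2)"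
  proof -
    have "(\<lambda>s. indicator I s *\<^sub>R (g s)\<^sup>2) = (\<lambda>s. indicator I s *\<^sub>R (f s * f s))"
      by (auto simp: fun_eq_iff g_def indicator_def power2_eq_square)
    thus ?thesis
      using set_integrable_continuous_mult[OF compact_Icc f f_int] unfolding set_integrable_def by simp
  qed
  moreover have "(LINT s:I|lborel. g s * e k s) = 0" for k
    using on_I[of "e k"] orth[of k] by (simp add: mult.commute)
  ultimately have "(LINT s:I|lborel. cov s t * g s) = 0"
    using t by (intro e_complete)
  thus ?thesis
    using on_I by simp
qed

theorem Mercer_diag:
  assumes t: "t \<in> I"
  shows "cov t t = mercer_kernel t t"
proof -
  define r where "r s = cov s t - mercer_kernel t s" for s
  have r_cont: "continuous_on I r"
    unfolding r_def using continuous_on_cov_left[OF t] continuous_on_mercer_kernel[OF t]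
    by (intro continuous_intros)
  have r_int: "set_integrable lborel I r"
    using set_integrable_continuous_mult[OF compact_Icc r_cont, of "\<lambda>_. 1"]
    by (simp add: set_integrable_def integrable_indicator_iff)
  have mult_int: "continuous_on I h \<Longrightarrow> set_integrable lborel I (\<lambda>s. h s * r s)" for h
    by (rule set_integrable_continuous_mult[OF compact_Icc _ r_int])
  have r_orth: "(LINT s:I|lborel. r s * e k s) = 0" for k
  proof -
    have "(LINT s:I|lborel. r s * e k s)
        = (LINT s:I|lborel. cov s t * e k s) - (LINT s:I|lborel. mercer_kernel t s * e k s)"
      unfolding r_def left_diff_distrib using set_integrable_e
      by (intro set_integral_diff(2) set_integrable_continuous_mult[OF compact_Icc]
          continuous_on_cov_left[OF t] continuous_on_mercer_kernel[OF t])
    thus ?thesis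
      using e_eigen[OF t] set_integral_mercer_kernel_mult_e[OF t] by simp
  qed
  have "(LINT s:I|lborel. r s * r s) = (LINT s:I|lborel. cov s t * r s - mercer_kernel t s * r s)"
    by (rule set_lebesgue_integral_cong) (auto simp: r_def algebra_simps)
  also have "\<dots> = (LINT s:I|lborel. cov s t * r s) - (LINT s:I|lborel. mercer_kernel t s * r s)"
    by (intro set_integral_diff(2) mult_int continuous_on_cov_left[OF t]
        continuous_on_mercer_kernel[OF t])
  also have "\<dots> = 0"
    using set_integral_cov_mult_eq_0[OF t r_cont r_orth]
      set_integral_mercer_kernel_mult_eq_0[OF t r_cont r_orth] by simp
  finally have "r t * r t = 0"
    using t r_cont mult_int[OF r_cont]
    by (intro continuous_nonneg_set_integral_eq_0_imp_eq_0[where f="\<lambda>s. r s * r s"])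
       (auto intro: continuous_intros)
  thus ?thesis
    unfolding r_def by simp
qed

lemma KL_residual_tendsto_0:
  assumes t: "t \<in> I"
  shows "(\<lambda>L. KL_residual L t) \<longlonglongrightarrow> 0"
proof -
  have "cov t t = (\<Sum>k. lam k * (e k t)\<^sup>2)"
    using Mercer_diag[OF t] unfolding mercer_kernel_def by (simp add: power2_eq_square mult.assoc)
  hence "(\<lambda>L. cov t t - (\<Sum>k<L. lam k * (e k t)\<^sup>2)) \<longlonglongrightarrow> cov t t - cov t t"
    using summable_LIMSEQ[OF summable_eigen_diag[OF t]] by (intro tendsto_diff) simp_all
  thus ?thesis
    using KL_residual_eq[OF t] by simp
qed

lemma KL_residual_uniformly_small:
  assumes r: "r > 0"
  shows "\<exists>L. \<forall>t\<in>I. KL_residual L t < r"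
proof (rule Dini_eventually_uniformly_less[OF compact_Icc])
  show "continuous_on I (\<lambda>t. KL_residual L t)" for L
  proof (rule continuous_on_eq)
    show "continuous_on I (\<lambda>t. cov t t - (\<Sum>k<L. lam k * (e k t)\<^sup>2))"
      by (intro continuous_intros continuous_on_cov_diag e_continuous)
  qed (simp add: KL_residual_eq)
  show "KL_residual L' t \<le> KL_residual L t" if "L \<le> L'" "t \<in> I" for L L' t
  proof -
    have "(\<Sum>k<L. lam k * (e k t)\<^sup>2) \<le> (\<Sum>k<L'. lam k * (e k t)\<^sup>2)"
      using that lam_nonneg by (intro sum_mono2) auto
    thus ?thesis
      using that by (simp add: KL_residual_eq)
  qed
  show "\<exists>L. KL_residual L t < r" if "t \<in> I" for t
    using order_tendstoD(2)[OF KL_residual_tendsto_0[OF that] r]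
    by (meson eventually_sequentially order_refl)
qed

lemma KL_residual_trunc_index_le:
  assumes "\<epsilon> > 0" "t \<in> I"
  shows "KL_residual (KL_trunc_index M X e \<epsilon>) t \<le> \<epsilon>\<^sup>2"
proof -
  obtain L where "\<forall>t\<in>I. KL_residual L t < \<epsilon>\<^sup>2"
    using KL_residual_uniformly_small[of "\<epsilon>\<^sup>2"] assms(1) by auto
  hence "\<forall>t\<in>I. KL_residual L t \<le> \<epsilon>\<^sup>2"
    by (simp add: less_imp_le)
  hence "\<forall>t\<in>I. KL_residual (KL_trunc_index M X e \<epsilon>) t \<le> \<epsilon>\<^sup>2"
    unfolding KL_trunc_index_def KL_residual_def[symmetric] by (rule LeastI)
  thus ?thesis using assms(2) by blast
qed

lemma expectation_square_X_diff_le: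
  assumes \<epsilon>: "\<epsilon> > 0" and s: "s \<in> I" and t: "t \<in> I"
    and e_Lipschitz: "\<And>k. \<bar>e k t - e k s\<bar> \<le> G k * \<bar>t - s\<bar>"
    and bdd: "bdd_above (range (\<lambda>k. lam k * (G k)\<^sup>2))"
  shows "(\<integral>\<omega>. (X t \<omega> - X s \<omega>)\<^sup>2 \<partial>M)
    \<le> 3 * real (KL_trunc_index M X e \<epsilon>) * (SUP k. lam k * (G k)\<^sup>2) * (t - s)\<^sup>2 + 6 * \<epsilon>\<^sup>2"
proof -
  define L where "L = KL_trunc_index M X e \<epsilon>"
  define C where "C = (SUP k. lam k * (G k)\<^sup>2)"
  define P where "P \<omega> = (\<Sum>k<L. Z k \<omega> * (e k t - e k s))" for \<omega>
  define R where "R u \<omega> = (\<Sum>k<L. Z k \<omega> * e k u) - X u \<omega>" for u \<omega>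
  have split: "X t \<omega> - X s \<omega> = P \<omega> - R t \<omega> + R s \<omega>" for \<omega>
    unfolding P_def R_def by (simp add: algebra_simps sum_subtractf)
  have P_int: "integrable M (\<lambda>\<omega>. (P \<omega>)\<^sup>2)"
    unfolding P_def by (rule expectation_square_sum_Z(1)) simp
  have R_int: "u \<in> I \<Longrightarrow> integrable M (\<lambda>\<omega>. (R u \<omega>)\<^sup>2)" for u
    unfolding R_def by (rule integrable_KL_residual)
  have "(\<integral>\<omega>. (X t \<omega> - X s \<omega>)\<^sup>2 \<partial>M) \<le> (\<integral>\<omega>. 3 * (P \<omega>)\<^sup>2 + 3 * (R t \<omega>)\<^sup>2 + 3 * (R s \<omega>)\<^sup>2 \<partial>M)"
  proof (rule integral_mono)
    show "integrable M (\<lambda>\<omega>. (X t \<omega> - X s \<omega>)\<^sup>2)"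
      by (rule integrable_square_X_diff[OF s t])
    show "integrable M (\<lambda>\<omega>. 3 * (P \<omega>)\<^sup>2 + 3 * (R t \<omega>)\<^sup>2 + 3 * (R s \<omega>)\<^sup>2)"
      using P_int R_int[OF s] R_int[OF t] by auto
  qed (simp add: split square_diff_add_le)
  also have "\<dots> = 3 * (\<integral>\<omega>. (P \<omega>)\<^sup>2 \<partial>M) + 3 * KL_residual L t + 3 * KL_residual L s"
    using P_int R_int[OF s] R_int[OF t] by (simp add: KL_residual_def R_def)
  also have "(\<integral>\<omega>. (P \<omega>)\<^sup>2 \<partial>M) = (\<Sum>k<L. lam k * (e k t - e k s)\<^sup>2)"
    unfolding P_def by (rule expectation_square_sum_Z(2)) simp
  also have "\<dots> \<le> (\<Sum>k<L. C * (t - s)\<^sup>2)"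
  proof (rule sum_mono)
    fix k
    have "(e k t - e k s)\<^sup>2 \<le> (G k * \<bar>t - s\<bar>)\<^sup>2"
      using e_Lipschitz[of k] by (subst power2_abs[symmetric], intro power_mono) auto
    hence "lam k * (e k t - e k s)\<^sup>2 \<le> lam k * (G k)\<^sup>2 * (t - s)\<^sup>2"
      using lam_nonneg[of k] by (simp add: mult_left_mono power_mult_distrib mult.assoc)
    also have "\<dots> \<le> C * (t - s)\<^sup>2"
      unfolding C_def by (intro mult_right_mono cSUP_upper[OF _ bdd]) auto
    finally show "lam k * (e k t - e k s)\<^sup>2 \<le> C * (t - s)\<^sup>2" .
  qed
  finally show ?thesis
    using KL_residual_trunc_index_le[OF \<epsilon> s] KL_residual_trunc_index_le[OF \<epsilon> t]
    unfolding L_def C_def by simp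
qed

end

section \<open>Sub-Gaussian coefficients\<close>

locale subgaussian_KL_expansion = KL_expansion +
  assumes Z_indep: "indep_vars (\<lambda>_. borel) (KL_coeff X e) UNIV"
    and Z_sub_gaussian: "sub_gaussian M (KL_coeff X e k) 0 (sqrt (lam k))"
begin

lemma expectation_exp_sum_Z_le:
  assumes F: "finite F"
  shows "integrable M (\<lambda>\<omega>. exp (\<theta> * (\<Sum>k\<in>F. Z k \<omega> * a k)))"
    and "(\<integral>\<omega>. exp (\<theta> * (\<Sum>k\<in>F. Z k \<omega> * a k)) \<partial>M) \<le> exp (\<theta>\<^sup>2 * (\<Sum>k\<in>F. lam k * (a k)\<^sup>2) / 2)"
proof -
  define Y where "Y k \<omega> = exp (\<theta> * (Z k \<omega> * a k))" for k \<omega>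
  have prod: "exp (\<theta> * (\<Sum>k\<in>F. Z k \<omega> * a k)) = (\<Prod>k\<in>F. Y k \<omega>)" for \<omega>
    unfolding Y_def using F by (simp add: sum_distrib_left exp_sum)
  have "indep_vars (\<lambda>_. borel) (\<lambda>k \<omega>. (\<lambda>z. exp (\<theta> * (z * a k))) (Z k \<omega>)) F"
    by (rule indep_vars_compose2[OF indep_vars_subset[OF Z_indep]]) auto
  hence indep: "indep_vars (\<lambda>_. borel) Y F"
    unfolding Y_def by simp
  have Y_int: "integrable M (Y k)" for k
  proof -
    have "integrable M (\<lambda>\<omega>. exp ((\<theta> * a k) * (Z k \<omega> - 0)))"
      using Z_sub_gaussian[of k] unfolding sub_gaussian_def by blast
    thus ?thesis
      unfolding Y_def by (simp add: ac_simps)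
  qed
  have Y_le: "(\<integral>\<omega>. Y k \<omega> \<partial>M) \<le> exp (\<theta>\<^sup>2 * (lam k * (a k)\<^sup>2) / 2)" for k
  proof -
    have "(\<integral>\<omega>. exp ((\<theta> * a k) * (Z k \<omega> - 0)) \<partial>M) \<le> exp ((\<theta> * a k)\<^sup>2 * (sqrt (lam k))\<^sup>2 / 2)"
      using Z_sub_gaussian[of k] unfolding sub_gaussian_def by blast
    thus ?thesis
      unfolding Y_def using lam_nonneg[of k] by (simp add: algebra_simps power_mult_distrib)
  qed
  show "integrable M (\<lambda>\<omega>. exp (\<theta> * (\<Sum>k\<in>F. Z k \<omega> * a k)))"
    unfolding prod using indep_vars_integrable[OF F indep] Y_int by simp
  have "(\<integral>\<omega>. exp (\<theta> * (\<Sum>k\<in>F. Z k \<omega> * a k)) \<partial>M) = (\<Prod>k\<in>F. \<integral>\<omega>. Y k \<omega> \<partial>M)"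
    unfolding prod using indep_vars_lebesgue_integral[OF F indep] Y_int by simp
  also have "\<dots> \<le> (\<Prod>k\<in>F. exp (\<theta>\<^sup>2 * (lam k * (a k)\<^sup>2) / 2))"
    by (intro prod_mono conjI Y_le integral_nonneg_AE) (auto simp: Y_def)
  also have "\<dots> = exp (\<theta>\<^sup>2 * (\<Sum>k\<in>F. lam k * (a k)\<^sup>2) / 2)"
    using F by (simp add: exp_sum[symmetric] sum_distrib_left sum_divide_distrib)
  finally show "(\<integral>\<omega>. exp (\<theta> * (\<Sum>k\<in>F. Z k \<omega> * a k)) \<partial>M)
      \<le> exp (\<theta>\<^sup>2 * (\<Sum>k\<in>F. lam k * (a k)\<^sup>2) / 2)" .
qed

text \<open>
  Sub-Gaussianity passes to a.s.\ limits of the partial sums by Fatou's lemma; a summable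
  sequence of \<open>L\<^sup>2\<close> errors makes the convergence almost sure.
\<close>

lemma expectation_exp_le_of_KL_approx:
  fixes L :: "nat \<Rightarrow> nat"
  assumes [measurable]: "W \<in> borel_measurable M" and W: "integrable M (\<lambda>\<omega>. (W \<omega>)\<^sup>2)"
    and WZ: "\<And>k. (\<integral>\<omega>. W \<omega> * Z k \<omega> \<partial>M) = lam k * a k"
    and summable: "summable (\<lambda>n. \<integral>\<omega>. ((\<Sum>k<L n. Z k \<omega> * a k) - W \<omega>)\<^sup>2 \<partial>M)"
  shows "integrable M (\<lambda>\<omega>. exp (\<theta> * W \<omega>))"
    and "(\<integral>\<omega>. exp (\<theta> * W \<omega>) \<partial>M) \<le> exp (\<theta>\<^sup>2 * (\<integral>\<omega>. (W \<omega>)\<^sup>2 \<partial>M) / 2)"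
proof -
  define S where "S n \<omega> = (\<Sum>k<L n. Z k \<omega> * a k)" for n \<omega>
  define V where "V = (\<integral>\<omega>. (W \<omega>)\<^sup>2 \<partial>M)"
  have [measurable]: "S n \<in> borel_measurable M" for n
    unfolding S_def by measurable
  have AE_conv: "AE \<omega> in M. (\<lambda>n. S n \<omega> - W \<omega>) \<longlonglongrightarrow> 0"
    using summable unfolding S_def
    by (intro AE_tendsto_0_of_summable_expectation_square expectation_square_sum_Z_diff(1)[OF _ W])
       (simp_all add: WZ)
  have S_int: "integrable M (\<lambda>\<omega>. exp (\<theta> * S n \<omega>))" for n
    unfolding S_def by (rule expectation_exp_sum_Z_le(1)) simp
  have S_le: "(\<integral>\<omega>. exp (\<theta> * S n \<omega>) \<partial>M) \<le> exp (\<theta>\<^sup>2 * V / 2)" for n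
  proof -
    have "(\<integral>\<omega>. exp (\<theta> * S n \<omega>) \<partial>M) \<le> exp (\<theta>\<^sup>2 * (\<Sum>k<L n. lam k * (a k)\<^sup>2) / 2)"
      unfolding S_def by (rule expectation_exp_sum_Z_le(2)) simp
    also have "\<dots> \<le> exp (\<theta>\<^sup>2 * V / 2)"
      unfolding V_def using sum_lam_square_le_expectation_square[OF _ W, of "{..<L n}" a] WZ
      by (simp add: mult_left_mono)
    finally show ?thesis .
  qed
  have lim: "AE \<omega> in M. (\<lambda>n. exp (\<theta> * S n \<omega>)) \<longlonglongrightarrow> exp (\<theta> * W \<omega>)"
    using AE_conv
  proof eventually_elim
    case (elim \<omega>)
    hence "(\<lambda>n. S n \<omega>) \<longlonglongrightarrow> W \<omega>"
      by (simp add: LIM_zero_iff)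
    thus ?case
      by (rule tendsto_exp[OF tendsto_mult_left])
  qed
  have exp_S: "(\<lambda>\<omega>. exp (\<theta> * S n \<omega>)) \<in> borel_measurable M" for n
    by measurable
  have exp_W: "(\<lambda>\<omega>. exp (\<theta> * W \<omega>)) \<in> borel_measurable M"
    by measurable
  note Fatou = Fatou_integral_le[OF exp_S exp_W exp_ge_zero lim S_int S_le]
  show "integrable M (\<lambda>\<omega>. exp (\<theta> * W \<omega>))"
    by (rule Fatou(1))
  show "(\<integral>\<omega>. exp (\<theta> * W \<omega>) \<partial>M) \<le> exp (\<theta>\<^sup>2 * (\<integral>\<omega>. (W \<omega>)\<^sup>2 \<partial>M) / 2)"
    unfolding V_def[symmetric] by (rule Fatou(2))
qed

text \<open>
  The residuals at the levels \<open>L\<^sub>X(2\<^sup>-\<^sup>n)\<close> are summable in \<open>n\<close>, so the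
  partial sums converge a.s.
\<close>

definition dyadic_trunc_index :: "nat \<Rightarrow> nat" where
  "dyadic_trunc_index n = KL_trunc_index M X e ((1 / 2) ^ n)"

lemma KL_residual_dyadic_trunc_index_le:
  "t \<in> I \<Longrightarrow> KL_residual (dyadic_trunc_index n) t \<le> (1 / 4) ^ n"
proof -
  have "((1 / 2 :: real) ^ n)\<^sup>2 = (1 / 4) ^ n"
    by (simp add: power2_eq_square flip: power_mult_distrib)
  moreover assume "t \<in> I"
  ultimately show ?thesis
    using KL_residual_trunc_index_le[of "(1 / 2) ^ n" t] by (simp add: dyadic_trunc_index_def)
qed

lemma summable_geometric_quarter: "summable (\<lambda>n. c * (1 / 4 :: real) ^ n)"
  by (intro summable_mult summable_geometric) simp

lemma sub_gaussian_X:
  assumes t: "t \<in> I"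
  shows "integrable M (\<lambda>\<omega>. exp (\<theta> * X t \<omega>))"
    and "(\<integral>\<omega>. exp (\<theta> * X t \<omega>) \<partial>M) \<le> exp (\<theta>\<^sup>2 * var_bound / 2)"
proof -
  have summable: "summable (\<lambda>n. \<integral>\<omega>. ((\<Sum>k<dyadic_trunc_index n. Z k \<omega> * e k t) - X t \<omega>)\<^sup>2 \<partial>M)"
    using KL_residual_dyadic_trunc_index_le[OF t]
    by (intro summable_comparison_test'[where N=0, OF summable_geometric_quarter[of 1]])
       (simp add: KL_residual_def)
  note approx = X_borel[OF t] X_square_integrable[OF t] expectation_X_mult_Z(2)[OF t] summable
  show "integrable M (\<lambda>\<omega>. exp (\<theta> * X t \<omega>))"
    by (rule expectation_exp_le_of_KL_approx(1)[OF approx])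
  have "(\<integral>\<omega>. exp (\<theta> * X t \<omega>) \<partial>M) \<le> exp (\<theta>\<^sup>2 * cov t t / 2)"
    unfolding cov_diag by (rule expectation_exp_le_of_KL_approx(2)[OF approx])
  also have "\<dots> \<le> exp (\<theta>\<^sup>2 * var_bound / 2)"
    using cov_diag_le_var_bound[OF t] by (simp add: mult_left_mono)
  finally show "(\<integral>\<omega>. exp (\<theta> * X t \<omega>) \<partial>M) \<le> exp (\<theta>\<^sup>2 * var_bound / 2)" .
qed

lemma sub_gaussian_X_diff:
  assumes s: "s \<in> I" and t: "t \<in> I"
  shows "integrable M (\<lambda>\<omega>. exp (\<theta> * (X t \<omega> - X s \<omega>)))"
    and "(\<integral>\<omega>. exp (\<theta> * (X t \<omega> - X s \<omega>)) \<partial>M) \<le> exp (\<theta>\<^sup>2 * (\<integral>\<omega>. (X t \<omega> - X s \<omega>)\<^sup>2 \<partial>M) / 2)"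
proof -
  define a where "a k = e k t - e k s" for k
  have [measurable]: "(\<lambda>\<omega>. X t \<omega> - X s \<omega>) \<in> borel_measurable M"
    using s t by measurable
  have cross: "(\<integral>\<omega>. (X t \<omega> - X s \<omega>) * Z k \<omega> \<partial>M) = lam k * a k" for k
    using expectation_X_mult_Z[OF s] expectation_X_mult_Z[OF t]
    by (simp add: a_def left_diff_distrib right_diff_distrib)
  have "(\<integral>\<omega>. ((\<Sum>k<dyadic_trunc_index n. Z k \<omega> * a k) - (X t \<omega> - X s \<omega>))\<^sup>2 \<partial>M) \<le> 4 * (1 / 4) ^ n"
    for n
  proof -
    let ?L = "dyadic_trunc_index n"
    let ?R = "\<lambda>u \<omega>. (\<Sum>k<?L. Z k \<omega> * e k u) - X u \<omega>"
    have "(\<integral>\<omega>. ((\<Sum>k<?L. Z k \<omega> * a k) - (X t \<omega> - X s \<omega>))\<^sup>2 \<partial>M) = (\<integral>\<omega>. (?R t \<omega> - ?R s \<omega>)\<^sup>2 \<partial>M)"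
      by (simp add: a_def algebra_simps sum_subtractf)
    also have "\<dots> \<le> (\<integral>\<omega>. 2 * (?R t \<omega>)\<^sup>2 + 2 * (?R s \<omega>)\<^sup>2 \<partial>M)"
    proof (rule integral_mono)
      have "?R u \<in> borel_measurable M" if "u \<in> I" for u
        using that by measurable
      thus "integrable M (\<lambda>\<omega>. (?R t \<omega> - ?R s \<omega>)\<^sup>2)"
        using s t by (intro integrable_square_diff integrable_KL_residual)
      show "integrable M (\<lambda>\<omega>. 2 * (?R t \<omega>)\<^sup>2 + 2 * (?R s \<omega>)\<^sup>2)"
        using integrable_KL_residual[OF s] integrable_KL_residual[OF t] by auto
    qed (rule square_diff_le)
    also have "\<dots> = 2 * KL_residual ?L t + 2 * KL_residual ?L s"
      using s t integrable_KL_residual by (simp add: KL_residual_def)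
    also have "\<dots> \<le> 4 * (1 / 4) ^ n"
      using KL_residual_dyadic_trunc_index_le[OF s, of n] KL_residual_dyadic_trunc_index_le[OF t, of n]
      by simp
    finally show ?thesis .
  qed
  hence summable: "summable (\<lambda>n. \<integral>\<omega>. ((\<Sum>k<dyadic_trunc_index n. Z k \<omega> * a k) - (X t \<omega> - X s \<omega>))\<^sup>2 \<partial>M)"
    by (intro summable_comparison_test'[where N=0, OF summable_geometric_quarter[of 4]]) simp
  show "integrable M (\<lambda>\<omega>. exp (\<theta> * (X t \<omega> - X s \<omega>)))"
    by (rule expectation_exp_le_of_KL_approx(1)[OF _ integrable_square_X_diff[OF s t] cross summable])
       simp
  show "(\<integral>\<omega>. exp (\<theta> * (X t \<omega> - X s \<omega>)) \<partial>M) \<le> exp (\<theta>\<^sup>2 * (\<integral>\<omega>. (X t \<omega> - X s \<omega>)\<^sup>2 \<partial>M) / 2)"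
    by (rule expectation_exp_le_of_KL_approx(2)[OF _ integrable_square_X_diff[OF s t] cross summable])
       simp
qed

lemma fourth_moment_X_diff_le:
  assumes s: "s \<in> I" and t: "t \<in> I"
  shows "integrable M (\<lambda>\<omega>. (X t \<omega> - X s \<omega>) ^ 4)"
    and "(\<integral>\<omega>. (X t \<omega> - X s \<omega>) ^ 4 \<partial>M) \<le> 1024 * (\<integral>\<omega>. (X t \<omega> - X s \<omega>)\<^sup>2 \<partial>M)\<^sup>2"
  using s t
  by (intro fourth_moment_le_of_mgf_bound[where W="\<lambda>\<omega>. X t \<omega> - X s \<omega>"] sub_gaussian_X_diff
      integrable_square_X_diff; measurable)+

lemma expectation_square_X_diff_mult_exp_le:
  assumes s: "s \<in> I" and t: "t \<in> I" and u: "u \<in> I"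
  shows "integrable M (\<lambda>\<omega>. (X t \<omega> - X s \<omega>)\<^sup>2 * exp (2 * c * X u \<omega>))"
    and "(\<integral>\<omega>. (X t \<omega> - X s \<omega>)\<^sup>2 * exp (2 * c * X u \<omega>) \<partial>M)
      \<le> (\<integral>\<omega>. (X t \<omega> - X s \<omega>)\<^sup>2 \<partial>M) * (1024 + exp (8 * c\<^sup>2 * var_bound)) / 2"
proof -
  have exp_sq: "(exp (2 * c * X u \<omega>))\<^sup>2 = exp ((4 * c) * X u \<omega>)" for \<omega>
    by (simp add: power2_eq_square flip: exp_add)
  have exp_int: "integrable M (\<lambda>\<omega>. (exp (2 * c * X u \<omega>))\<^sup>2)"
    unfolding exp_sq by (rule sub_gaussian_X(1)[OF u])
  have exp_le: "(\<integral>\<omega>. (exp (2 * c * X u \<omega>))\<^sup>2 \<partial>M) \<le> exp (8 * c\<^sup>2 * var_bound)"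
    using sub_gaussian_X(2)[OF u, of "4 * c"] unfolding exp_sq by (simp add: power_mult_distrib ac_simps)
  have D: "(\<lambda>\<omega>. X t \<omega> - X s \<omega>) \<in> borel_measurable M"
    using s t by measurable
  have Y: "(\<lambda>\<omega>. exp (2 * c * X u \<omega>)) \<in> borel_measurable M"
    using u by measurable
  note split = expectation_square_mult_le[OF exp_int exp_le D Y fourth_moment_X_diff_le[OF s t]
      integrable_square_X_diff[OF s t]]
  show "integrable M (\<lambda>\<omega>. (X t \<omega> - X s \<omega>)\<^sup>2 * exp (2 * c * X u \<omega>))"
    by (rule split(1))
  show "(\<integral>\<omega>. (X t \<omega> - X s \<omega>)\<^sup>2 * exp (2 * c * X u \<omega>) \<partial>M)
      \<le> (\<integral>\<omega>. (X t \<omega> - X s \<omega>)\<^sup>2 \<partial>M) * (1024 + exp (8 * c\<^sup>2 * var_bound)) / 2"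
    by (rule split(2))
qed

lemma expectation_square_transform_diff_le:
  fixes g :: "real \<Rightarrow> real \<Rightarrow> real"
  assumes s: "s \<in> I" and t: "t \<in> I" and K: "K \<ge> 0"
    and g_space: "\<And>u x y. u \<in> I \<Longrightarrow> g u x - g u y \<le> max \<bar>exp (c * x) - exp (c * y)\<bar> (K * \<bar>x - y\<bar>)"
    and g_time: "\<And>x. \<bar>g t x - g s x\<bar> \<le> T"
  shows "integrable M (\<lambda>\<omega>. (g t (X t \<omega>) - g s (X s \<omega>))\<^sup>2)"
    and "(\<integral>\<omega>. (g t (X t \<omega>) - g s (X s \<omega>))\<^sup>2 \<partial>M)
      \<le> (4 * c\<^sup>2 * (1024 + exp (8 * c\<^sup>2 * var_bound)) + 2 * K\<^sup>2) * (\<integral>\<omega>. (X t \<omega> - X s \<omega>)\<^sup>2 \<partial>M)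
        + 2 * T\<^sup>2"
proof -
  define V where "V = (\<integral>\<omega>. (X t \<omega> - X s \<omega>)\<^sup>2 \<partial>M)"
  define E where "E u \<omega> = (X t \<omega> - X s \<omega>)\<^sup>2 * exp (2 * c * X u \<omega>)" for u \<omega>
  define B where "B \<omega> = 4 * c\<^sup>2 * (E t \<omega> + E s \<omega>) + 2 * K\<^sup>2 * (X t \<omega> - X s \<omega>)\<^sup>2 + 2 * T\<^sup>2" for \<omega>
  have g_borel[measurable]: "g u \<in> borel_measurable borel" if "u \<in> I" for u
    using continuous_on_of_diff_le_max_exp[OF g_space[OF that]] by (rule borel_measurable_continuous_onI)
  have pointwise: "(g t (X t \<omega>) - g s (X s \<omega>))\<^sup>2 \<le> B \<omega>" for \<omega>
    using square_diff_le_of_diff_le_max_exp[where h="g t" and h'="g s", OF g_space[OF t] g_time K,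
        of "X t \<omega>" "X s \<omega>"]
    unfolding B_def E_def by (simp add: algebra_simps)
  have E_int: "integrable M (E u)" and E_le: "(\<integral>\<omega>. E u \<omega> \<partial>M) \<le> V * (1024 + exp (8 * c\<^sup>2 * var_bound)) / 2"
    if "u \<in> I" for u
    unfolding E_def V_def using expectation_square_X_diff_mult_exp_le[OF s t that] by auto
  have B_int: "integrable M B"
    unfolding B_def using E_int[OF s] E_int[OF t] integrable_square_X_diff[OF s t] by auto
  show int: "integrable M (\<lambda>\<omega>. (g t (X t \<omega>) - g s (X s \<omega>))\<^sup>2)"
    using s t pointwise
    by (intro Bochner_Integration.integrable_bound[OF B_int]) (auto intro!: AE_I2 order_trans[OF _ abs_ge_self])
  have "(\<integral>\<omega>. (g t (X t \<omega>) - g s (X s \<omega>))\<^sup>2 \<partial>M) \<le> (\<integral>\<omega>. B \<omega> \<partial>M)"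
    by (rule integral_mono[OF int B_int pointwise])
  also have "\<dots> = 4 * c\<^sup>2 * ((\<integral>\<omega>. E t \<omega> \<partial>M) + (\<integral>\<omega>. E s \<omega> \<partial>M)) + 2 * K\<^sup>2 * V + 2 * T\<^sup>2"
    unfolding B_def V_def using E_int[OF s] E_int[OF t] integrable_square_X_diff[OF s t] by (simp add: prob_space)
  also have "\<dots> \<le> 4 * c\<^sup>2 * (V * (1024 + exp (8 * c\<^sup>2 * var_bound)) / 2 + V * (1024 + exp (8 * c\<^sup>2 * var_bound)) / 2)
      + 2 * K\<^sup>2 * V + 2 * T\<^sup>2"
    using E_le[OF s] E_le[OF t] by (intro add_mono mult_left_mono order_refl) auto
  finally show "(\<integral>\<omega>. (g t (X t \<omega>) - g s (X s \<omega>))\<^sup>2 \<partial>M)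
      \<le> (4 * c\<^sup>2 * (1024 + exp (8 * c\<^sup>2 * var_bound)) + 2 * K\<^sup>2) * (\<integral>\<omega>. (X t \<omega> - X s \<omega>)\<^sup>2 \<partial>M)
        + 2 * T\<^sup>2"
    unfolding V_def by (simp add: algebra_simps)
qed

end

theorem lemma4:
  fixes M :: "'a measure" and X :: "real \<Rightarrow> 'a \<Rightarrow> real"
    and e :: "nat \<Rightarrow> real \<Rightarrow> real" and lam :: "nat \<Rightarrow> real" and G :: "nat \<Rightarrow> real"
    and g :: "real \<Rightarrow> real \<Rightarrow> real" and c_g K_g K'_g :: real
  assumes M: "prob_space M"
    and X_meas: "(\<lambda>(t, \<omega>). indicator {0..1} t * X t \<omega>) \<in> borel_measurable (lborel \<Otimes>\<^sub>M M)"
    and X_sq: "\<forall>t\<in>{0..1}. integrable M (\<lambda>\<omega>. (X t \<omega>)\<^sup>2)"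
    and X_centered: "\<forall>t\<in>{0..1}. integrable M (X t) \<and> (\<integral>\<omega>. X t \<omega> \<partial>M) = 0"
    and cov_cont: "continuous_on ({0..1} \<times> {0..1}) (\<lambda>(s, t). cov_fun M X s t)"
    and e_meas: "\<forall>k. e k \<in> borel_measurable lborel"
    and e_orth: "\<forall>i j. set_integrable lborel {0..1} (\<lambda>s. e i s * e j s) \<and>
                   (LINT s:{0..1}|lborel. e i s * e j s) = (if i = j then 1 else 0)"
    and e_eigen: "\<forall>k. \<forall>t\<in>{0..1}. set_integrable lborel {0..1} (\<lambda>s. cov_fun M X s t * e k s) \<and>
                   (LINT s:{0..1}|lborel. cov_fun M X s t * e k s) = lam k * e k t"
    and e_complete: "\<forall>f. f \<in> borel_measurable lborel \<longrightarrow>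
                   set_integrable lborel {0..1} (\<lambda>s. (f s)\<^sup>2) \<longrightarrow>
                   (\<forall>k. (LINT s:{0..1}|lborel. f s * e k s) = 0) \<longrightarrow>
                   (\<forall>t\<in>{0..1}. (LINT s:{0..1}|lborel. cov_fun M X s t * f s) = 0)"
    and lam_mono: "antimono lam"
    and lam_nonneg: "\<forall>k. lam k \<ge> 0"
    and Z_indep: "prob_space.indep_vars M (\<lambda>_. borel) (KL_coeff X e) UNIV"
    and Z_subg: "\<forall>k. sub_gaussian M (KL_coeff X e k) 0 (sqrt (lam k))"
    and e_lip: "\<forall>k. \<forall>x\<in>{0..1}. \<forall>y\<in>{0..1}. \<bar>e k x - e k y\<bar> \<le> G k * \<bar>x - y\<bar>"
    and C_M: "bdd_above (range (\<lambda>k. lam k * (G k)\<^sup>2))"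
    and K_g: "K_g \<ge> 0" and K'_g: "K'_g \<ge> 0"
    and g_lip: "\<forall>t\<in>{0..1}. \<forall>x y. g t x - g t y \<le> max \<bar>exp (c_g * x) - exp (c_g * y)\<bar> (K_g * \<bar>x - y\<bar>)"
    and g_time: "\<forall>x. \<forall>s\<in>{0..1}. \<forall>t\<in>{0..1}. \<bar>g t x - g s x\<bar> \<le> K'_g * \<bar>t - s\<bar>"
  shows "\<exists>C\<^sub>3::real. \<forall>\<epsilon>>0. \<forall>s\<in>{0..1}. \<forall>t\<in>{0..1}.
           integrable M (\<lambda>\<omega>. (g t (X t \<omega>) - g s (X s \<omega>))\<^sup>2) \<and>
           (\<integral>\<omega>. (g t (X t \<omega>) - g s (X s \<omega>))\<^sup>2 \<partial>M)
             \<le> C\<^sub>3 * ((real (KL_trunc_index M X e \<epsilon>) + K'_g\<^sup>2) * (t - s)\<^sup>2 + \<epsilon>\<^sup>2)"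
proof -
  interpret subgaussian_KL_expansion M X e lam
  proof (intro subgaussian_KL_expansion.intro KL_expansion.intro M
      subgaussian_KL_expansion_axioms.intro KL_expansion_axioms.intro)
    show "X t \<in> borel_measurable M" if "t \<in> {0..1}" for t
      using X_centered that by auto
    show "continuous_on {0..1} (e k)" for k
      using e_lip by (intro continuous_on_of_Lipschitz_bound) blast
    show "integrable M (\<lambda>\<omega>. (KL_coeff X e k \<omega>)\<^sup>2)" for k
      using Z_subg by (intro prob_space.square_integrable_of_sub_gaussian[OF M]) blast
  qed (use X_meas X_sq cov_cont e_meas e_orth e_eigen e_complete lam_nonneg Z_indep Z_subg in auto)
  define C where "C = (SUP k. lam k * (G k)\<^sup>2)"
  define A where "A = 4 * c_g\<^sup>2 * (1024 + exp (8 * c_g\<^sup>2 * var_bound)) + 2 * K_g\<^sup>2"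
  have "C \<ge> 0"
    unfolding C_def using lam_nonneg[of 0] by (intro order_trans[OF _ cSUP_upper[OF _ C_M, of 0]]) auto
  have "A \<ge> 0"
    unfolding A_def by simp
  show ?thesis
  proof (intro exI[of _ "3 * A * C + 6 * A + 2"] allI impI ballI conjI)
    fix \<epsilon> s t :: real
    assume \<epsilon>: "\<epsilon> > 0" and s: "s \<in> {0..1}" and t: "t \<in> {0..1}"
    note transform =
      expectation_square_transform_diff_le[OF s t K_g, where g=g and c=c_g and T="K'_g * \<bar>t - s\<bar>"]
    show "integrable M (\<lambda>\<omega>. (g t (X t \<omega>) - g s (X s \<omega>))\<^sup>2)"
      using g_lip g_time s t by (intro transform(1)) auto
    have "(\<integral>\<omega>. (g t (X t \<omega>) - g s (X s \<omega>))\<^sup>2 \<partial>M)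
        \<le> A * (\<integral>\<omega>. (X t \<omega> - X s \<omega>)\<^sup>2 \<partial>M) + 2 * (K'_g * \<bar>t - s\<bar>)\<^sup>2"
      unfolding A_def using g_lip g_time s t by (intro transform(2)) auto
    also have "\<dots> \<le> A * (3 * real (KL_trunc_index M X e \<epsilon>) * C * (t - s)\<^sup>2 + 6 * \<epsilon>\<^sup>2) + 2 * K'_g\<^sup>2 * (t - s)\<^sup>2"
      unfolding C_def using e_lip s t \<open>A \<ge> 0\<close>
      by (intro add_mono mult_left_mono expectation_square_X_diff_le[OF \<epsilon> s t _ C_M])
         (auto simp: power_mult_distrib)
    also have "\<dots> \<le> (3 * A * C + 6 * A + 2) * ((real (KL_trunc_index M X e \<epsilon>) + K'_g\<^sup>2) * (t - s)\<^sup>2 + \<epsilon>\<^sup>2)"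
      using \<open>A \<ge> 0\<close> \<open>C \<ge> 0\<close> by (intro bound_le_const_mult) auto
    finally show "(\<integral>\<omega>. (g t (X t \<omega>) - g s (X s \<omega>))\<^sup>2 \<partial>M)
        \<le> (3 * A * C + 6 * A + 2) * ((real (KL_trunc_index M X e \<epsilon>) + K'_g\<^sup>2) * (t - s)\<^sup>2 + \<epsilon>\<^sup>2)" .
  qed
qed

end
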